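(* Let $d(n)$ be the number of cubes of $\mathbb{T}$ ending at position $n$. For $m\ge7$ let $\Gamma_{m,1}$ be the integer interval (increasing vector) $[\frac{t_{m}+t_{m-2}-1}{2},\dots,\frac{t_{m+1}+t_{m-1}-3}{2}]$, and for a vector $V=[v_1,\dots,v_r]$ write $d(V)=[d(v_1),\dots,d(v_r)]$. Then $d(n)=0$ for $n\leq51$, and \begin{align*} d(\Gamma_{7,1})&=d([52,\dots,95])=[\underbrace{0,\dots,0}_6,1,\underbrace{0,\dots,0}_{37}];\\ d(\Gamma_{8,1})&=d([96,\dots,176])=[\underbrace{0,\dots,0}_{11},1,1,\underbrace{0,\dots,0}_{30},1,\underbrace{0,\dots,0}_{37}];\\ d(\Gamma_{9,1})&=d([177,\dots,325])=[\underbrace{0,\dots,0}_{20},\underbrace{1,\dots,1}_4,\underbrace{0,\dots,0}_{6},1,\underbrace{0,\dots,0}_{48},1,1,\underbrace{0,\dots,0}_{30},1,\underbrace{0,\dots,0}_{37}]; \end{align*} and for $m\geq10$ (juxtaposition denoting concatenation of vectors and $+$ coordinatewise addition) $$d(\Gamma_{m,1})=[d(\Gamma_{m-3,1}),d(\Gamma_{m-2,1}),d(\Gamma_{m-1,1})]+[\underbrace{0,\dots,0,}_{\frac{-t_{m-2}+5t_{m-4}+1}{2}}\underbrace{1,\dots,1,}_{\frac{t_{m-2}-3t_{m-4}-1}{2}}\underbrace{0,\dots,0}_{t_{m-2}+t_{m-3}}].$$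
   Context: The Tribonacci sequence $\mathbb{T}=x_1x_2x_3\cdots$ is the fixed point (infinite word starting with $a$) of the substitution $\sigma(a)=ab$, $\sigma(b)=ac$, $\sigma(c)=a$ over $\{a,b,c\}$. The Tribonacci numbers are $t_m=|\sigma^m(a)|$ for $m\ge0$, with $t_{-2}=0$, $t_{-1}=1$; thus $t_0=1,t_1=2,t_2=4$ and $t_m=t_{m-1}+t_{m-2}+t_{m-3}$. For a nonempty factor $\omega$ of $\mathbb{T}$ and $p\ge1$, $\omega_p$ denotes the $p$-th occurrence of $\omega$ in $\mathbb{T}$ (occurrences ordered by starting position). A cube is a pair $(\omega,p)$ such that $\omega_{p+1}$ begins immediately after $\omega_p$ ends and $\omega_{p+2}$ begins immediately after $\omega_{p+1}$ ends (i.e. $\omega_p\omega_{p+1}\omega_{p+2}$ is a factor of $\mathbb{T}$); it ends at position $n$ if the last letter of $\omega_{p+2}$ is at position $n$. Thus $d(n)=\#\{(\omega,p):\omega_p\omega_{p+1}\omega_{p+2}\text{ ends at position }n\}$. *)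

theory Defs
  imports Main
begin

datatype letter = LA | LB | LC

fun sig :: "letter \<Rightarrow> letter list" where
  "sig LA = [LA, LB]"
| "sig LB = [LA, LC]"
| "sig LC = [LA]"

definition sigma :: "letter list \<Rightarrow> letter list" where
  "sigma w = concat (map sig w)"

definition trib :: "nat \<Rightarrow> nat" where
  "trib m = length ((sigma ^^ m) [LA])"

text \<open>The Tribonacci word, positions numbered from 1: x_n is the n-th letter of
  sigma^n(a) (a prefix of the fixed point, of length t_n > n).\<close>
definition tw :: "nat \<Rightarrow> letter" where
  "tw n = ((sigma ^^ n) [LA]) ! (n - 1)"

definition occurs_at :: "letter list \<Rightarrow> nat \<Rightarrow> bool" where
  "occurs_at w i \<longleftrightarrow> 1 \<le> i \<and> (\<forall>k < length w. tw (i + k) = w ! k)"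

definition nth_occ :: "letter list \<Rightarrow> nat \<Rightarrow> nat \<Rightarrow> bool" where
  "nth_occ w p i \<longleftrightarrow> 1 \<le> p \<and> occurs_at w i \<and> card {j. j < i \<and> occurs_at w j} = p - 1"

definition cube_ending_at :: "letter list \<Rightarrow> nat \<Rightarrow> nat \<Rightarrow> bool" where
  "cube_ending_at w p n \<longleftrightarrow> w \<noteq> [] \<and>
     (\<exists>i. nth_occ w p i \<and> nth_occ w (p + 1) (i + length w) \<and>
          nth_occ w (p + 2) (i + 2 * length w) \<and> i + 3 * length w - 1 = n)"

definition dcube :: "nat \<Rightarrow> nat" where
  "dcube n = card {(w, p). cube_ending_at w p n}"

definition gamma_lo :: "nat \<Rightarrow> nat" where
  "gamma_lo m = (trib m + trib (m - 2) - 1) div 2"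

definition gamma_hi :: "nat \<Rightarrow> nat" where
  "gamma_hi m = (trib (m + 1) + trib (m - 1) - 3) div 2"

definition Gamma1 :: "nat \<Rightarrow> nat list" where
  "Gamma1 m = [gamma_lo m ..< gamma_hi m + 1]"

definition dvec :: "nat list \<Rightarrow> nat list" where
  "dvec V = map dcube V"

end

theory Submission
  imports Defs "HOL-Library.Sublist"
begin

text \<open>
  Since \<open>\<T> = \<sigma>(\<T>)\<close>, the map \<open>n \<mapsto> |\<sigma>(x\<^sub>1\<cdots>x\<^sub>n)|\<close> acts on positions, and every position
  is the first or the second letter of a block \<open>\<sigma>(x\<^sub>q)\<close>. The second letter of a block
  determines its preimage, so a factor of period \<open>L \<ge> 2\<close> and length \<open>\<ge> 3L - 1\<close>
  desubstitutes to a factor of smaller period and length \<open>\<ge> 3L' - 1\<close>. Descending to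
  period \<open>1\<close> (the squares \<open>aa\<close>) shows that such maximal runs have period \<open>t\<^sub>k\<close> and are
  \<open>\<sigma>\<^sup>k\<^sup>+\<^sup>4\<close>-images of one explicit run. A cube contains no inner occurrence of its period
  word (that would create a second, smaller period of the same run), so the cubes ending at
  \<open>n\<close> correspond to the periods \<open>L\<close> of \<open>x\<^sub>n\<^sub>+\<^sub>1\<^sub>-\<^sub>3\<^sub>L\<cdots>x\<^sub>n\<close>.

  The upper end \<open>\<gamma>\<^sub>m = t\<^sub>0 + \<cdots> + t\<^sub>m\<^sub>-\<^sub>1\<close> of \<open>\<Gamma>\<^sub>m\<^sub>,\<^sub>1\<close> is the length of a prefix that reoccurs at
  position \<open>t\<^sub>m + 1\<close>. Hence the cubes ending at \<open>n \<in> \<Gamma>\<^sub>m\<^sub>,\<^sub>1\<close> are the translates of the cubes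
  ending at \<open>n - t\<^sub>m\<^sub>-\<^sub>1 \<in> \<Gamma>\<^sub>m\<^sub>-\<^sub>3\<^sub>,\<^sub>1 \<union> \<Gamma>\<^sub>m\<^sub>-\<^sub>2\<^sub>,\<^sub>1 \<union> \<Gamma>\<^sub>m\<^sub>-\<^sub>1\<^sub>,\<^sub>1\<close>, plus one cube for each \<open>n\<close> in the
  window of the first run of period \<open>t\<^sub>m\<^sub>-\<^sub>4\<close>; the small cases follow by iterating this.
\<close>

section \<open>The substitution and the Tribonacci numbers\<close>

lemma sigma_Nil [simp]: "sigma [] = []"
  by (simp add: sigma_def)

lemma sigma_Cons [simp]: "sigma (x # xs) = sig x @ sigma xs"
  by (simp add: sigma_def)

lemma sigma_append [simp]: "sigma (xs @ ys) = sigma xs @ sigma ys"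
  by (simp add: sigma_def)

lemma funpow_sigma_append: "(sigma ^^ j) (xs @ ys) = (sigma ^^ j) xs @ (sigma ^^ j) ys"
  by (induction j) auto

lemma length_sig: "length (sig l) = (if l = LC then 1 else 2)"
  by (cases l) auto

definition trib_word :: "nat \<Rightarrow> letter list" where
  "trib_word j = (sigma ^^ j) [LA]"

lemma length_trib_word: "length (trib_word j) = trib j"
  by (simp add: trib_def trib_word_def)

lemma trib_word_Suc: "trib_word (Suc j) = sigma (trib_word j)"
  by (simp add: trib_word_def)

lemma trib_word_small:
  "trib_word 0 = [LA]" "trib_word 1 = [LA, LB]" "trib_word 2 = [LA, LB, LA, LC]"
  "trib_word 3 = [LA, LB, LA, LC, LA, LB, LA]"
  by (simp_all add: trib_word_def numeral_eq_Suc)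

lemma trib_word_Suc_split: "trib_word (Suc j) = trib_word j @ (sigma ^^ j) [LB]"
  using funpow_sigma_append[of j "[LA]" "[LB]"]
  by (simp add: trib_word_def funpow_Suc_right del: funpow.simps)

lemma trib_word_rec: "trib_word (j + 3) = trib_word (j + 2) @ trib_word (j + 1) @ trib_word j"
proof -
  have "trib_word (j + 3) = (sigma ^^ j) (trib_word 3)"
    unfolding trib_word_def by (simp only: funpow_add o_apply)
  also have "trib_word 3 = trib_word 2 @ trib_word 1 @ trib_word 0"
    by (simp add: trib_word_def numeral_eq_Suc)
  finally show ?thesis
    unfolding funpow_sigma_append trib_word_def by (simp only: funpow_add o_apply funpow_0)
qed

lemma trib_0 [simp]: "trib 0 = 1"
  and trib_1 [simp]: "trib (Suc 0) = 2"
  and trib_2 [simp]: "trib (Suc (Suc 0)) = 4"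
  by (simp_all add: trib_def)

lemma trib_rec: "trib (j + 3) = trib (j + 2) + trib (j + 1) + trib j"
  by (simp flip: length_trib_word add: trib_word_rec)

lemma trib_Suc_Suc_Suc: "trib (Suc (Suc (Suc j))) = trib (Suc (Suc j)) + trib (Suc j) + trib j"
  using trib_rec[of j] by (simp add: numeral_eq_Suc)

text \<open>With truncated subtraction, \<open>trib (0 - 1) = trib 0\<close> plays the role of \<open>t\<^sub>-\<^sub>1 = 1\<close>.\<close>
lemma trib_Suc_Suc: "trib (Suc (Suc i)) = trib (Suc i) + trib i + trib (i - 1)"
  by (cases i) (simp_all add: trib_Suc_Suc_Suc)

lemma trib_values:
  "trib 1 = 2" "trib 2 = 4" "trib 3 = 7" "trib 4 = 13" "trib 5 = 24" "trib 6 = 44" "trib 7 = 81"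
  "trib 8 = 149" "trib 9 = 274" "trib 10 = 504"
  by (simp_all add: eval_nat_numeral trib_Suc_Suc_Suc)

lemma trib_word_prefix: "j \<le> k \<Longrightarrow> prefix (trib_word j) (trib_word k)"
  by (induction k rule: dec_induct)
    (auto simp: trib_word_Suc_split intro: prefix_order.trans)

lemma trib_mono: "j \<le> k \<Longrightarrow> trib j \<le> trib k"
  using trib_word_prefix prefix_length_le by (metis length_trib_word)

lemma trib_pos: "1 \<le> trib j"
  using trib_mono[of 0 j] by simp

lemma strict_mono_trib: "strict_mono trib"
  unfolding strict_mono_Suc_iff
proof
  fix j show "trib j < trib (Suc j)"
    using trib_Suc_Suc[of "j - 1"] trib_pos[of "j - 1"] by (cases j) simp_all
qed

lemma trib_less_iff [simp]: "trib i < trib j \<longleftrightarrow> i < j"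
  using strict_mono_trib by (rule strict_mono_less)

lemma trib_ge: "j + 1 \<le> trib j"
proof (induction j)
  case (Suc j)
  have "trib j < trib (Suc j)" by simp
  with Suc show ?case by linarith
qed simp

lemma trib_Suc_le: "trib (Suc k) \<le> 2 * trib k"
proof (cases "k < 2")
  case False
  then obtain i where "k = Suc (Suc i)"
    by (metis add_2_eq_Suc le_Suc_ex not_less)
  then show ?thesis
    using trib_Suc_Suc_Suc[of i] trib_Suc_Suc[of i] by simp
qed (auto simp: less_2_cases_iff)

lemma tw_trib_word:
  assumes "1 \<le> n" "n \<le> trib j"
  shows "tw n = trib_word j ! (n - 1)"
proof -
  have "prefix (trib_word n) (trib_word j) \<or> prefix (trib_word j) (trib_word n)"
    using trib_word_prefix nat_le_linear by blast
  moreover have "n - 1 < trib n" "n - 1 < trib j"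
    using trib_ge[of n] assms by auto
  ultimately show ?thesis
    by (auto simp: tw_def trib_word_def[symmetric] prefix_def nth_append length_trib_word)
qed

section \<open>Factors and the action of \<open>\<sigma>\<close> on positions\<close>

definition factor :: "nat \<Rightarrow> nat \<Rightarrow> letter list" where
  "factor i n = map tw [i..<i + n]"

lemma length_factor [simp]: "length (factor i n) = n"
  by (simp add: factor_def)

lemma nth_factor: "k < n \<Longrightarrow> factor i n ! k = tw (i + k)"
  by (simp add: factor_def)

lemma factor_0 [simp]: "factor i 0 = []"
  by (simp add: factor_def)

lemma factor_Suc: "factor i (Suc n) = factor i n @ [tw (i + n)]"
  by (simp add: factor_def)

lemma factor_add: "factor i (m + n) = factor i m @ factor (i + m) n"
  unfolding factor_def using upt_add_eq_append[of i "i + m" n] by (simp add: add.assoc)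

lemma factor_take: "m \<le> n \<Longrightarrow> factor i m = take m (factor i n)"
  by (rule nth_equalityI) (auto simp: nth_factor)

lemma factor_eq_iff: "factor i n = factor i' n \<longleftrightarrow> (\<forall>k<n. tw (i + k) = tw (i' + k))"
  by (metis length_factor nth_equalityI nth_factor)

lemma factor_1_trib_word:
  assumes "n \<le> trib j"
  shows "factor 1 n = take n (trib_word j)"
proof (rule nth_equalityI)
  fix i assume "i < length (factor 1 n)"
  then show "factor 1 n ! i = take n (trib_word j) ! i"
    using assms tw_trib_word[of "Suc i" j] by (simp add: nth_factor)
qed (use assms in \<open>simp add: length_trib_word\<close>)

lemma factor_1_trib: "factor 1 (trib j) = trib_word j"
  using factor_1_trib_word[of "trib j" j] by (simp add: length_trib_word)

lemma occurs_at_iff_factor: "occurs_at w i \<longleftrightarrow> 1 \<le> i \<and> factor i (length w) = w"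
  unfolding occurs_at_def by (metis length_factor nth_equalityI nth_factor)

text \<open>Since \<open>\<sigma>\<close> fixes the word, \<open>\<sigma>(x\<^sub>1\<cdots>x\<^sub>n)\<close> is again a prefix (\<open>sigma_factor_1\<close>); thus
  \<open>sigma_len\<close> is the action of \<open>\<sigma>\<close> on end positions of prefixes.\<close>
definition sigma_len :: "nat \<Rightarrow> nat" where
  "sigma_len n = length (sigma (factor 1 n))"

lemma sigma_factor_1: "sigma (factor 1 n) = factor 1 (sigma_len n)"
proof -
  obtain j where j: "n \<le> trib j"
    using trib_ge[of n] by (metis Suc_eq_plus1 Suc_leD)
  then obtain z where z: "trib_word j = factor 1 n @ z"
    by (metis append_take_drop_id factor_1_trib_word)
  then have z': "trib_word (Suc j) = sigma (factor 1 n) @ sigma z"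
    by (simp add: trib_word_Suc)
  have "sigma_len n \<le> trib (Suc j)"
    by (simp add: sigma_len_def z' flip: length_trib_word)
  then have "factor 1 (sigma_len n) = take (sigma_len n) (trib_word (Suc j))"
    by (rule factor_1_trib_word)
  then show ?thesis
    by (simp add: z' sigma_len_def)
qed

lemma sigma_len_0 [simp]: "sigma_len 0 = 0"
  by (simp add: sigma_len_def)

lemma sigma_len_Suc: "sigma_len (Suc n) = sigma_len n + length (sig (tw (Suc n)))"
  by (simp add: sigma_len_def factor_Suc)

lemma strict_mono_sigma_len: "strict_mono sigma_len"
  unfolding strict_mono_Suc_iff by (simp add: sigma_len_Suc length_sig)

lemma sigma_len_less_iff [simp]: "sigma_len m < sigma_len n \<longleftrightarrow> m < n"
  using strict_mono_sigma_len by (rule strict_mono_less)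

lemma sigma_len_le_iff [simp]: "sigma_len m \<le> sigma_len n \<longleftrightarrow> m \<le> n"
  using strict_mono_sigma_len by (rule strict_mono_less_eq)

lemma sigma_len_add_ge: "sigma_len q + n \<le> sigma_len (q + n)"
proof (induction n)
  case (Suc n)
  then show ?case
    using sigma_len_less_iff[of "q + n" "Suc (q + n)"] by (simp del: sigma_len_less_iff)
qed simp

lemma sigma_len_ge: "n \<le> sigma_len n"
  using sigma_len_add_ge[of 0 n] by simp

lemma factor_1_sigma_len_Suc:
  "factor 1 (sigma_len (Suc q)) = factor 1 (sigma_len q) @ sig (tw (Suc q))"
  using sigma_factor_1[of "Suc q"] sigma_factor_1[of q] by (simp add: factor_Suc)

lemma tw_block:
  assumes "r < length (sig (tw (Suc q)))"
  shows "tw (sigma_len q + 1 + r) = sig (tw (Suc q)) ! r"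
proof -
  have "factor 1 (sigma_len (Suc q)) ! (sigma_len q + r) = tw (sigma_len q + 1 + r)"
    using assms by (simp add: nth_factor sigma_len_Suc)
  then show ?thesis
    using factor_1_sigma_len_Suc[of q] by (simp add: nth_append)
qed

lemma tw_block_start: "tw (sigma_len q + 1) = LA"
  using tw_block[of 0 q] by (cases "tw (Suc q)") (auto simp: length_sig)

lemma tw_block_second:
  "tw (sigma_len q + 2) = (case tw (Suc q) of LA \<Rightarrow> LB | LB \<Rightarrow> LC | LC \<Rightarrow> LA)"
proof (cases "tw (Suc q)")
  case LC
  then have "sigma_len (Suc q) = sigma_len q + 1"
    by (simp add: sigma_len_Suc)
  then show ?thesis
    using tw_block_start[of "Suc q"] LC by simp
qed (use tw_block[of 1 q] in \<open>auto simp: length_sig\<close>)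

lemma tw_desubst:
  "tw (Suc q) = (case tw (sigma_len q + 2) of LB \<Rightarrow> LA | LC \<Rightarrow> LB | LA \<Rightarrow> LC)"
  by (cases "tw (Suc q)") (use tw_block_second[of q] in auto)

lemma tw_block_last: "tw (sigma_len (Suc q)) = last (sig (tw (Suc q)))"
  using tw_block[of "length (sig (tw (Suc q))) - 1" q]
  by (cases "tw (Suc q)") (auto simp: sigma_len_Suc)

lemma block_containing:
  assumes "1 \<le> p"
  obtains q where "sigma_len q < p" "p \<le> sigma_len (Suc q)"
proof -
  have "\<exists>q'. p \<le> sigma_len q'"
    using sigma_len_ge by blast
  then obtain q' where q': "p \<le> sigma_len q'" "\<forall>q<q'. \<not> p \<le> sigma_len q"
    using exists_least_iff[of "\<lambda>q. p \<le> sigma_len q"] by blast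
  with assms obtain q where "q' = Suc q"
    by (cases q') auto
  with q' show ?thesis
    using that by (meson lessI not_le)
qed

lemma block_position:
  assumes "1 \<le> p"
  obtains q where "p = sigma_len q + 1"
  | q where "p = sigma_len q + 2" "sigma_len (Suc q) = sigma_len q + 2" "tw (Suc q) \<noteq> LC"
proof -
  obtain q where "sigma_len q < p" "p \<le> sigma_len (Suc q)"
    using block_containing assms by blast
  then have "p = sigma_len q + 1 \<or>
      (p = sigma_len q + 2 \<and> sigma_len (Suc q) = sigma_len q + 2 \<and> tw (Suc q) \<noteq> LC)"
    by (auto simp: sigma_len_Suc length_sig split: if_splits)
  then show ?thesis
    using that by blast
qed

lemma tw_LA_block_start:
  assumes "tw p = LA" "1 \<le> p"
  obtains q where "p = sigma_len q + 1"
  using assms(2)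
proof (cases rule: block_position)
  case (2 q)
  then show ?thesis
    using tw_block_second[of q] assms(1) by (cases "tw (Suc q)") auto
qed

lemma tw_not_LA:
  assumes "tw p \<noteq> LA" "1 \<le> p"
  obtains q where "p = sigma_len q + 2" "sigma_len (Suc q) = sigma_len q + 2" "tw (Suc q) \<noteq> LC"
  using assms(2)
proof (cases rule: block_position)
  case (1 q)
  then show ?thesis
    using tw_block_start[of q] assms(1) by simp
qed

lemma tw_0: "tw 0 = LA"
  by (simp add: tw_def)

lemma tw_1: "tw 1 = LA"
  by (simp add: tw_def)

text \<open>Position \<open>0\<close> is not part of the word; \<open>tw 0 = LA\<close> is a junk value that makes the
  next lemma hold without the hypothesis \<open>1 \<le> p\<close>.\<close>
lemma tw_Suc_not_LA:
  assumes "tw p \<noteq> LA"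
  shows "tw (Suc p) = LA"
proof -
  have "1 \<le> p"
    using assms tw_0 by (cases p) auto
  then obtain q where "p = sigma_len q + 2" "sigma_len (Suc q) = sigma_len q + 2"
    using tw_not_LA assms by blast
  then show ?thesis
    using tw_block_start[of "Suc q"] by simp
qed

lemma tw_pred_not_LA:
  assumes "tw p \<noteq> LA" "1 \<le> p"
  shows "2 \<le> p" "tw (p - 1) = LA"
proof -
  obtain q where "p = sigma_len q + 2"
    using tw_not_LA assms by blast
  then show "2 \<le> p" "tw (p - 1) = LA"
    using tw_block_start[of q] by simp_all
qed

lemma tw_no_LC_LC: "tw q = LC \<Longrightarrow> tw (Suc q) \<noteq> LC"
  using tw_Suc_not_LA by auto

lemma tw_no_LA_LA_LA:
  assumes "tw p = LA" "tw (p + 1) = LA" "1 \<le> p"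
  shows "tw (p + 2) \<noteq> LA"
proof
  assume "tw (p + 2) = LA"
  obtain q where q: "p = sigma_len q + 1"
    using tw_LA_block_start assms by blast
  have c1: "tw (Suc q) = LC"
    using tw_block_second[of q] assms(2) q by (cases "tw (Suc q)") auto
  then have "sigma_len (Suc q) = sigma_len q + 1"
    by (simp add: sigma_len_Suc)
  then have "tw (Suc (Suc q)) = LC"
    using tw_block_second[of "Suc q"] \<open>tw (p + 2) = LA\<close> q by (cases "tw (Suc (Suc q))") auto
  with c1 tw_no_LC_LC show False by blast
qed

lemma sigma_factor:
  "sigma (factor (x + 1) n) = factor (sigma_len x + 1) (sigma_len (x + n) - sigma_len x)"
proof -
  have "factor 1 (sigma_len (x + n)) = factor 1 (sigma_len x) @ sigma (factor (x + 1) n)"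
    using factor_add[of 1 x n] by (metis sigma_append sigma_factor_1 add.commute)
  moreover have "factor 1 (sigma_len (x + n))
      = factor 1 (sigma_len x) @ factor (sigma_len x + 1) (sigma_len (x + n) - sigma_len x)"
    using factor_add[of 1 "sigma_len x" "sigma_len (x + n) - sigma_len x"] sigma_len_add_ge[of x n]
    by (simp add: add.commute)
  ultimately show ?thesis
    by simp
qed

lemma sigma_len_add: "sigma_len (x + n) = sigma_len x + length (sigma (factor (x + 1) n))"
  using sigma_factor[of x n] sigma_len_add_ge[of x n] by simp

lemma sigma_len_add_factor_1:
  "factor (x + 1) n = factor 1 n \<Longrightarrow> sigma_len (x + n) = sigma_len x + sigma_len n"
  using sigma_len_add[of x n] by (simp add: sigma_len_def)

lemma sigma_len_trib: "sigma_len (trib i) = trib (Suc i)"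
  using factor_1_trib[of i] by (simp add: sigma_len_def trib_word_Suc flip: length_trib_word)

lemma funpow_sigma_len_trib: "(sigma_len ^^ j) (trib i) = trib (i + j)"
  by (induction j) (auto simp: sigma_len_trib)

lemma funpow_sigma_len_0 [simp]: "(sigma_len ^^ j) 0 = 0"
  by (induction j) auto

lemma funpow_sigma_len_less_iff [simp]: "(sigma_len ^^ j) a < (sigma_len ^^ j) b \<longleftrightarrow> a < b"
  by (induction j) auto

lemma funpow_sigma_len_le_iff [simp]: "(sigma_len ^^ j) a \<le> (sigma_len ^^ j) b \<longleftrightarrow> a \<le> b"
  by (induction j) auto

lemma funpow_sigma_factor:
  "(sigma ^^ j) (factor (x + 1) n)
     = factor ((sigma_len ^^ j) x + 1) ((sigma_len ^^ j) (x + n) - (sigma_len ^^ j) x)"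
proof (induction j)
  case (Suc j)
  let ?a = "(sigma_len ^^ j) x" and ?b = "(sigma_len ^^ j) (x + n)"
  have "(sigma ^^ Suc j) (factor (x + 1) n) = sigma (factor (?a + 1) (?b - ?a))"
    using Suc by simp
  also have "\<dots> = factor (sigma_len ?a + 1) (sigma_len (?a + (?b - ?a)) - sigma_len ?a)"
    by (rule sigma_factor)
  finally show ?case
    by simp
qed simp

lemma length_funpow_sigma_letter_ge: "1 \<le> j \<Longrightarrow> trib (j - 1) \<le> length ((sigma ^^ j) [l])"
proof -
  assume "1 \<le> j"
  then obtain i where j: "j = Suc i"
    by (cases j) auto
  have "(sigma ^^ j) [l] = (sigma ^^ i) (sig l)"
    by (simp add: j funpow_Suc_right del: funpow.simps)
  moreover have "sig l = [LA] @ tl (sig l)"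
    by (cases l) auto
  ultimately show ?thesis
    using j by (metis funpow_sigma_append diff_Suc_1 le_add1 length_append length_trib_word trib_word_def)
qed

lemma funpow_sigma_len_add_1_ge:
  assumes "1 \<le> j"
  shows "(sigma_len ^^ j) y + trib (j - 1) \<le> (sigma_len ^^ j) (y + 1)"
proof -
  have "length ((sigma ^^ j) (factor (y + 1) 1)) = (sigma_len ^^ j) (y + 1) - (sigma_len ^^ j) y"
    by (simp only: funpow_sigma_factor length_factor)
  moreover have "factor (y + 1) 1 = [tw (y + 1)]"
    by (simp add: factor_def)
  ultimately have "length ((sigma ^^ j) [tw (y + 1)]) = (sigma_len ^^ j) (y + 1) - (sigma_len ^^ j) y"
    by simp
  moreover have "(sigma_len ^^ j) y \<le> (sigma_len ^^ j) (y + 1)"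
    by simp
  ultimately show ?thesis
    using length_funpow_sigma_letter_ge[OF assms, of "tw (y + 1)"] by linarith
qed

lemma factor_trib_add_1:
  assumes "1 \<le> j" "n \<le> trib (j - 1)"
  shows "factor (trib j + 1) n = factor 1 n"
proof -
  obtain i where j: "j = Suc i"
    using assms(1) by (cases j) auto
  have "prefix (trib_word i) ((sigma ^^ j) [LB])"
    by (simp add: j funpow_Suc_right funpow_sigma_append[of i "[LA]" "[LC]", simplified]
        trib_word_def del: funpow.simps)
  then obtain z where z: "trib_word (Suc j) = trib_word j @ trib_word i @ z"
    by (auto simp: trib_word_Suc_split prefix_def)
  then have len: "trib (Suc j) = trib j + trib i + length z"
    by (simp flip: length_trib_word)
  show ?thesis
    unfolding factor_eq_iff
  proof (intro allI impI)
    fix k assume k: "k < n"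
    have "tw (trib j + 1 + k) = trib_word (Suc j) ! (trib j + k)"
      using tw_trib_word[of "trib j + 1 + k" "Suc j"] assms k j len by simp
    also have "\<dots> = trib_word i ! k"
      using z k assms j by (simp add: nth_append length_trib_word)
    also have "\<dots> = tw (1 + k)"
      using tw_trib_word[of "1 + k" i] k assms j by simp
    finally show "tw (trib j + 1 + k) = tw (1 + k)" .
  qed
qed

lemma sigma_len_trib_add:
  "1 \<le> j \<Longrightarrow> n \<le> trib (j - 1) \<Longrightarrow> sigma_len (trib j + n) = trib (Suc j) + sigma_len n"
  using sigma_len_add_factor_1[OF factor_trib_add_1] by (simp add: sigma_len_trib)

text \<open>Every image \<open>\<sigma>\<^sup>3(x\<^sub>x\<^sub>+\<^sub>1x\<^sub>x\<^sub>+\<^sub>2\<cdots>)\<close> begins with \<open>\<sigma>\<^sup>3(a) = abacaba\<close>: the block of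
  \<open>x\<^sub>x\<^sub>+\<^sub>1\<close> starts with \<open>a\<close>, hence its image with \<open>aba\<close>, and \<open>\<sigma>(aba) = abacab\<close> is
  followed by the start of another block.\<close>
lemma factor_funpow_sigma_len_3: "factor ((sigma_len ^^ 3) x + 1) 7 = trib_word 3"
proof -
  let ?S = sigma_len
  define y where "y = tw (?S x + 2)"
  have "factor (?S x + 1) 2 = [LA, y]"
    using tw_block_start[of x] by (simp add: y_def numeral_eq_Suc factor_Suc)
  then have s2: "sigma (factor (?S x + 1) 2) = [LA, LB] @ sig y"
    by simp
  then have f2: "factor (?S (?S x) + 1) (?S (?S x + 2) - ?S (?S x)) = [LA, LB] @ sig y"
    using sigma_factor[of "?S x" 2] by simp
  have "3 \<le> ?S (?S x + 2) - ?S (?S x)"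
    using sigma_len_add[of "?S x" 2] s2 by (cases y) auto
  then have "factor (?S (?S x) + 1) 3 = [LA, LB, LA]"
    using factor_take[of 3 _ "?S (?S x) + 1"] f2 by (cases y) (auto simp: numeral_eq_Suc)
  then have s3: "sigma (factor (?S (?S x) + 1) 3) = [LA, LB, LA, LC, LA, LB]"
    by simp
  then have f3: "factor (?S (?S (?S x)) + 1) (?S (?S (?S x) + 3) - ?S (?S (?S x)))
      = [LA, LB, LA, LC, LA, LB]"
    using sigma_factor[of "?S (?S x)" 3] by simp
  have l3: "?S (?S (?S x) + 3) = ?S (?S (?S x)) + 6"
    using sigma_len_add[of "?S (?S x)" 3] s3 by simp
  have "factor (?S (?S (?S x)) + 1) 7 = factor (?S (?S (?S x)) + 1) 6 @ [tw (?S (?S (?S x)) + 1 + 6)]"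
    by (simp add: factor_Suc numeral_eq_Suc)
  also have "tw (?S (?S (?S x)) + 1 + 6) = LA"
    using tw_block_start[of "?S (?S x) + 3"] l3 by simp
  finally have "factor (?S (?S (?S x)) + 1) 7 = trib_word 3"
    using f3 l3 by (simp add: trib_word_small)
  then show ?thesis
    by (simp add: numeral_3_eq_3)
qed

lemma factor_funpow_sigma_len:
  assumes "3 \<le> j"
  shows "factor ((sigma_len ^^ j) x + 1) (trib j) = trib_word j"
  using assms
proof (induction j rule: dec_induct)
  case base
  then show ?case
    using factor_funpow_sigma_len_3 by (simp add: trib_values)
next
  case (step j)
  let ?y = "(sigma_len ^^ j) x"
  have "factor (sigma_len ?y + 1) (sigma_len (?y + trib j) - sigma_len ?y) = trib_word (Suc j)"
    using step.IH sigma_factor[of ?y "trib j"] by (simp add: trib_word_Suc)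
  moreover from this have "sigma_len (?y + trib j) - sigma_len ?y = trib (Suc j)"
    by (metis length_factor length_trib_word)
  ultimately show ?case
    by simp
qed

lemma sigma_len_funpow_add:
  assumes "3 \<le> j" "y \<le> trib j"
  shows "sigma_len ((sigma_len ^^ j) x + y) = (sigma_len ^^ Suc j) x + sigma_len y"
proof -
  have "factor ((sigma_len ^^ j) x + 1) y = factor 1 y"
    using factor_funpow_sigma_len[OF assms(1)] factor_1_trib factor_take[OF assms(2)] by metis
  then show ?thesis
    by (simp add: sigma_len_add_factor_1)
qed

section \<open>Self-similarity of the prefixes\<close>

lemma odd_trib_Suc_Suc_add_trib: "odd (trib (Suc (Suc j)) + trib j)"
proof (induction j rule: less_induct)
  case (less j)
  show ?case
  proof (cases "j < 3")
    case True
    then have "j = 0 \<or> j = Suc 0 \<or> j = Suc (Suc 0)"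
      by auto
    then show ?thesis
      by (auto simp: trib_Suc_Suc_Suc)
  next
    case False
    then obtain i where j: "j = Suc (Suc (Suc i))"
      by (metis less_Suc_eq numeral_3_eq_3 not0_implies_Suc)
    have "trib (Suc (Suc j)) + trib j
        = (trib (Suc (Suc (Suc (Suc i)))) + trib (Suc (Suc i)))
          + (trib (Suc (Suc (Suc i))) + trib (Suc i)) + (trib (Suc (Suc i)) + trib i)"
      by (simp add: j trib_Suc_Suc_Suc)
    moreover have "odd (trib (Suc (Suc (Suc (Suc i)))) + trib (Suc (Suc i)))"
      "odd (trib (Suc (Suc (Suc i))) + trib (Suc i))" "odd (trib (Suc (Suc i)) + trib i)"
      using less.IH j by simp_all
    ultimately show ?thesis
      by presburger
  qed
qed

lemma gamma_hi_eq: "2 * gamma_hi j + 3 = trib (Suc j) + trib (j - 1)"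
proof -
  have "odd (trib (Suc j) + trib (j - 1))"
    using odd_trib_Suc_Suc_add_trib[of "j - 1"] by (cases j) simp_all
  moreover have "2 \<le> trib (Suc j)" "1 \<le> trib (j - 1)"
    using trib_mono[of 1 "Suc j"] trib_pos by simp_all
  ultimately show ?thesis
    unfolding gamma_hi_def Suc_eq_plus1[symmetric] by presburger
qed

lemma gamma_hi_0 [simp]: "gamma_hi 0 = 0"
  using gamma_hi_eq[of 0] by simp

lemma gamma_hi_Suc: "gamma_hi (Suc m) = gamma_hi m + trib m"
  using gamma_hi_eq[of m] gamma_hi_eq[of "Suc m"] trib_Suc_Suc[of m] trib_Suc_Suc[of "m - 1"]
  by (cases m) simp_all

lemma gamma_hi_rec:
  assumes "3 \<le> j"
  shows "gamma_hi j = trib j + gamma_hi (j - 3)"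
proof -
  obtain i where "j = Suc (Suc (Suc i))"
    using assms by (metis less_Suc_eq numeral_3_eq_3 not0_implies_Suc not_le)
  then show ?thesis
    by (simp add: gamma_hi_Suc trib_Suc_Suc_Suc)
qed

lemma gamma_hi_mono: "i \<le> j \<Longrightarrow> gamma_hi i \<le> gamma_hi j"
  by (induction j rule: dec_induct) (auto simp: gamma_hi_Suc)

lemma gamma_hi_le_trib: "gamma_hi j \<le> trib (Suc j)"
  using gamma_hi_eq[of j] trib_mono[of "j - 1" "Suc j"] by linarith

lemma gamma_hi_Suc_less: "gamma_hi (Suc k) < 3 * trib k"
  using gamma_hi_eq[of "Suc k"] trib_Suc_Suc[of k] trib_Suc_le[of k] trib_mono[of "k - 1" k]
    trib_pos[of k] by simp

lemma gamma_hi_values: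
  "gamma_hi 1 = 1" "gamma_hi 2 = 3" "gamma_hi 3 = 7" "gamma_hi 4 = 14" "gamma_hi 5 = 27" "gamma_hi 6 = 51"
  "gamma_hi 7 = 95" "gamma_hi 8 = 176" "gamma_hi 9 = 325"
  by (simp_all add: eval_nat_numeral gamma_hi_Suc trib_Suc_Suc_Suc)

lemma Gamma1_Suc: "Gamma1 (Suc m) = [gamma_hi m + 1 ..< gamma_hi (Suc m) + 1]"
proof -
  have "trib (Suc m - 2) = trib (m - 1)"
    by (cases m) auto
  then have "gamma_lo (Suc m) = gamma_hi m + 1"
    using gamma_hi_eq[of m] unfolding gamma_lo_def by presburger
  then show ?thesis
    by (simp add: Gamma1_def)
qed

lemma sigma_len_gamma_hi: "sigma_len (gamma_hi j) + 1 = gamma_hi (Suc j)"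
proof (induction j rule: less_induct)
  case (less j)
  show ?case
  proof (cases "j < 3")
    case True
    have "tw 3 = LA"
      using tw_trib_word[of 3 2] by (simp add: trib_word_small trib_values)
    then have "sigma_len 3 = 6"
      using sigma_len_Suc[of 2] sigma_len_trib[of 1] by (simp add: numeral_eq_Suc)
    moreover have "sigma_len 1 = 2"
      using sigma_len_trib[of 0] by simp
    moreover have "j = 0 \<or> j = 1 \<or> j = 2"
      using True by auto
    ultimately show ?thesis
      using gamma_hi_values(1) by (auto simp: gamma_hi_Suc numeral_eq_Suc)
  next
    case False
    then have j: "3 \<le> j"
      by simp
    have "gamma_hi (j - 3) \<le> trib (j - 1)"
      using gamma_hi_le_trib[of "j - 3"] trib_mono[of "Suc (j - 3)" "j - 1"] j by fastforce
    then have "sigma_len (gamma_hi j) = trib (Suc j) + sigma_len (gamma_hi (j - 3))"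
      using sigma_len_trib_add[of j "gamma_hi (j - 3)"] gamma_hi_rec[OF j] j by simp
    moreover have "sigma_len (gamma_hi (j - 3)) + 1 = gamma_hi (Suc (j - 3))"
      using less.IH[of "j - 3"] j by simp
    moreover have "Suc (j - 3) = Suc j - 3"
      using j by simp
    ultimately show ?thesis
      using gamma_hi_rec[of "Suc j"] j by simp
  qed
qed

lemma factor_trib_gamma_hi: "factor (trib j + 1) (gamma_hi j) = factor 1 (gamma_hi j)"
proof (induction j)
  case (Suc j)
  have len: "sigma_len (trib j + gamma_hi j) = trib (Suc j) + sigma_len (gamma_hi j)"
    using sigma_len_add_factor_1[OF Suc] by (simp add: sigma_len_trib)
  have "factor (trib (Suc j) + 1) (sigma_len (gamma_hi j)) = factor 1 (sigma_len (gamma_hi j))"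
    using arg_cong[OF Suc, of sigma] sigma_factor[of "trib j" "gamma_hi j"]
      sigma_factor[of 0 "gamma_hi j"] len by (simp add: sigma_len_trib)
  moreover have "tw (trib (Suc j) + 1 + sigma_len (gamma_hi j)) = tw (1 + sigma_len (gamma_hi j))"
    using tw_block_start[of "trib j + gamma_hi j"] tw_block_start[of "gamma_hi j"] len
    by (simp add: add.commute add.left_commute)
  moreover have "gamma_hi (Suc j) = Suc (sigma_len (gamma_hi j))"
    using sigma_len_gamma_hi[of j] by simp
  ultimately show ?case
    by (simp only: factor_Suc)
qed simp

lemma tw_trib_add:
  assumes "1 \<le> x" "x \<le> gamma_hi j"
  shows "tw (trib j + x) = tw x"
  using factor_trib_gamma_hi[of j, unfolded factor_eq_iff, rule_format, of "x - 1"] assms by simp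

section \<open>Periodicity and desubstitution\<close>

lemma sigma_len_add_gt: "2 \<le> n \<Longrightarrow> sigma_len q + n < sigma_len (q + n)"
proof -
  assume "2 \<le> n"
  then obtain m where n: "n = 2 + m"
    by (metis le_Suc_ex)
  have "sigma_len (Suc (Suc q))
      = sigma_len q + length (sig (tw (Suc q))) + length (sig (tw (Suc (Suc q))))"
    by (simp add: sigma_len_Suc)
  moreover have "\<not> (tw (Suc q) = LC \<and> tw (Suc (Suc q)) = LC)"
    using tw_no_LC_LC by blast
  ultimately have "sigma_len q + 3 \<le> sigma_len (q + 2)"
    by (auto simp: length_sig)
  then show ?thesis
    using sigma_len_add_ge[of "q + 2" m] n by (simp add: add.assoc)
qed

lemma desubst_period_less:
  assumes "sigma_len (q + L') = sigma_len q + L" "2 \<le> L"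
  shows "L' < L"
  using assms sigma_len_add_gt[of L' q] by (cases "2 \<le> L'") auto

definition periodic :: "nat \<Rightarrow> nat \<Rightarrow> nat \<Rightarrow> bool" where
  "periodic L i j \<longleftrightarrow> (\<forall>y. i \<le> y \<longrightarrow> y + L \<le> j \<longrightarrow> tw y = tw (y + L))"

lemma periodic_mono: "periodic L i j \<Longrightarrow> i \<le> i' \<Longrightarrow> j' \<le> j \<Longrightarrow> periodic L i' j'"
  by (auto simp: periodic_def)

lemma periodic_mod:
  assumes "periodic L i n" "1 \<le> L" "i + a \<le> n"
  shows "tw (i + a) = tw (i + a mod L)"
  using assms(3)
proof (induction a rule: less_induct)
  case (less a)
  show ?case
  proof (cases "a < L")
    case False
    then have "tw (i + (a - L)) = tw (i + (a - L) + L)"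
      using assms(1) less.prems by (simp add: periodic_def)
    then have "tw (i + (a - L)) = tw (i + a)"
      using False by simp
    moreover have "tw (i + (a - L)) = tw (i + a mod L)"
      using less.IH[of "a - L"] less.prems assms(2) False by (simp add: le_mod_geq)
    ultimately show ?thesis
      by simp
  qed simp
qed

text \<open>The second letter of a block determines the letter the block comes from, so a
  period of the image that maps one block boundary to another propagates block by block.\<close>
lemma periodic_desubst_shift:
  assumes P: "periodic L (sigma_len q0 + 1) (sigma_len r + 1)"
    and L': "sigma_len (q0 + L') = sigma_len q0 + L"
  shows "q0 \<le> q \<Longrightarrow> q + L' \<le> r \<Longrightarrow> sigma_len (q + L') = sigma_len q + L"
proof (induction q rule: dec_induct)
  case (step n)
  then have IH: "sigma_len (n + L') = sigma_len n + L"
    by simp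
  have "sigma_len (n + L') < sigma_len (Suc n + L')" "sigma_len (Suc n + L') \<le> sigma_len r"
    "sigma_len q0 \<le> sigma_len n"
    using step.prems step.hyps(1) by simp_all
  then have "sigma_len q0 + 1 \<le> sigma_len n + 2" "sigma_len n + 2 + L \<le> sigma_len r + 1"
    using IH by linarith+
  then have "tw (sigma_len n + 2) = tw (sigma_len n + 2 + L)"
    using P unfolding periodic_def by blast
  then have "tw (Suc n) = tw (Suc (n + L'))"
    using tw_desubst[of n] tw_desubst[of "n + L'"] IH by (simp add: add.commute add.left_commute)
  then show ?case
    using IH by (simp add: sigma_len_Suc)
qed (use L' in simp)

lemma periodic_desubst:
  assumes P: "periodic L (sigma_len q0 + 1) (sigma_len r + 1)"
    and L': "sigma_len (q0 + L') = sigma_len q0 + L"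
  shows "periodic L' (q0 + 1) r"
  unfolding periodic_def
proof (intro allI impI)
  fix y assume y: "q0 + 1 \<le> y" "y + L' \<le> r"
  then obtain q where q: "y = Suc q" "q0 \<le> q"
    by (cases y) auto
  have IH: "sigma_len (q + L') = sigma_len q + L"
    using periodic_desubst_shift[OF P L' q(2)] y q by simp
  have "sigma_len (q + L') < sigma_len (Suc q + L')" "sigma_len (Suc q + L') \<le> sigma_len r"
    "sigma_len q0 \<le> sigma_len q"
    using y q by simp_all
  then have "sigma_len q0 + 1 \<le> sigma_len q + 2" "sigma_len q + 2 + L \<le> sigma_len r + 1"
    using IH by linarith+
  then have "tw (sigma_len q + 2) = tw (sigma_len q + 2 + L)"
    using P unfolding periodic_def by blast
  then show "tw y = tw (y + L')"
    using tw_desubst[of q] tw_desubst[of "q + L'"] IH q by (simp add: add.commute add.left_commute)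
qed

lemma desubst_period:
  assumes "tw (sigma_len q0 + 1 + L) = LA" "1 \<le> L"
  obtains L' where "1 \<le> L'" "sigma_len (q0 + L') = sigma_len q0 + L"
proof -
  obtain q1 where q1: "sigma_len q0 + 1 + L = sigma_len q1 + 1"
    using assms(1) by (rule tw_LA_block_start) simp
  then have "sigma_len q0 < sigma_len q1"
    using assms(2) by linarith
  then have "q0 < q1"
    by simp
  then show ?thesis
    using that[of "q1 - q0"] q1 by simp
qed

text \<open>Infinite descent: an eventual period \<open>L \<ge> 2\<close> desubstitutes to a smaller eventual
  period, and the period \<open>1\<close> would produce \<open>aaa\<close>.\<close>
lemma not_eventually_periodic: "1 \<le> L \<Longrightarrow> \<exists>y\<ge>s. tw y \<noteq> tw (y + L)"
proof (induction L arbitrary: s rule: less_induct)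
  case (less L)
  show ?case
  proof (rule ccontr)
    assume "\<not> ?thesis"
    then have H: "\<And>y. s \<le> y \<Longrightarrow> tw y = tw (y + L)"
      by blast
    have "\<exists>p. s \<le> p \<and> 1 \<le> p \<and> tw p = LA"
    proof (cases "tw (max s 1) = LA")
      case True
      then show ?thesis
        by (intro exI[of _ "max s 1"]) simp
    next
      case False
      then show ?thesis
        using tw_Suc_not_LA by (intro exI[of _ "Suc (max s 1)"]) simp
    qed
    then obtain p where p: "s \<le> p" "1 \<le> p" "tw p = LA"
      by blast
    obtain q0 where q0: "p = sigma_len q0 + 1"
      using p(3,2) by (rule tw_LA_block_start)
    have "tw (p + L) = LA"
      using H[of p] p by simp
    show False
    proof (cases "L = 1")
      case True
      have "tw (p + 1) = LA"
        using H[of p] p True by simp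
      moreover have "tw (p + 2) = LA"
        using H[of "p + 1"] p True calculation by (simp add: numeral_2_eq_2)
      ultimately show False
        using tw_no_LA_LA_LA p by blast
    next
      case False
      obtain L' where L': "sigma_len (q0 + L') = sigma_len q0 + L" "1 \<le> L'"
        using desubst_period[of q0 L] \<open>tw (p + L) = LA\<close> q0 less.prems by auto
      have "L' < L"
        using desubst_period_less[OF L'(1)] False less.prems by simp
      moreover have "tw y = tw (y + L')" if "q0 + 1 \<le> y" for y
      proof -
        have "periodic L (sigma_len q0 + 1) (sigma_len (y + L') + 1)"
          unfolding periodic_def using p q0 by (auto intro!: H)
        then have "periodic L' (q0 + 1) (y + L')"
          using L'(1) by (rule periodic_desubst)
        then show ?thesis
          using that unfolding periodic_def by blast
      qed
      ultimately show False
        using less.IH[OF _ L'(2), of "q0 + 1"] by blast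
    qed
  qed
qed

section \<open>Maximal runs\<close>

definition maximal_run :: "nat \<Rightarrow> nat \<Rightarrow> nat \<Rightarrow> bool" where
  "maximal_run L s e \<longleftrightarrow> 1 \<le> L \<and> 1 \<le> s \<and> s + L \<le> e \<and> periodic L s e \<and>
     (s = 1 \<or> tw (s - 1) \<noteq> tw (s - 1 + L)) \<and> tw (e + 1) \<noteq> tw (e + 1 - L)"

lemma periodic_extend_left:
  assumes P: "periodic L i j" and "1 \<le> i"
  obtains s where "1 \<le> s" "s \<le> i" "periodic L s j" "s = 1 \<or> tw (s - 1) \<noteq> tw (s - 1 + L)"
proof -
  define s where "s = (LEAST s'. 1 \<le> s' \<and> periodic L s' j)"
  have "1 \<le> s \<and> periodic L s j"
    unfolding s_def by (rule LeastI[of _ i]) (use P assms(2) in auto)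
  moreover have "s \<le> i"
    unfolding s_def by (rule Least_le) (use P assms(2) in auto)
  ultimately have s: "1 \<le> s" "periodic L s j" "s \<le> i"
    by simp_all
  have "s = 1 \<or> tw (s - 1) \<noteq> tw (s - 1 + L)"
  proof (rule ccontr)
    assume h: "\<not> ?thesis"
    have "periodic L (s - 1) j"
      unfolding periodic_def
    proof (intro allI impI)
      fix z assume "s - 1 \<le> z" "z + L \<le> j"
      then show "tw z = tw (z + L)"
        using h s(2) by (cases "z = s - 1") (auto simp: periodic_def)
    qed
    moreover have "1 \<le> s - 1"
      using s h by linarith
    ultimately have "s \<le> s - 1"
      unfolding s_def by (intro Least_le) simp
    then show False
      using s by simp
  qed
  with s that show ?thesis
    by blast
qed

lemma periodic_extend_right:
  assumes P: "periodic L s j" and "1 \<le> L"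
  obtains e where "j \<le> e" "periodic L s e" "tw (e + 1) \<noteq> tw (e + 1 - L)"
proof -
  obtain y where "s \<le> y" "tw y \<noteq> tw (y + L)"
    using not_eventually_periodic assms(2) by blast
  then have bound: "\<And>e'. periodic L s e' \<Longrightarrow> e' \<le> y + L"
    unfolding periodic_def by (meson not_le order.strict_implies_order)
  define e where "e = (GREATEST e'. periodic L s e')"
  have e: "periodic L s e" "j \<le> e"
    unfolding e_def using P bound
    by (auto intro: GreatestI_nat[where P = "periodic L s"] Greatest_le_nat[where P = "periodic L s"])
  have "tw (e + 1) \<noteq> tw (e + 1 - L)"
  proof
    assume h: "tw (e + 1) = tw (e + 1 - L)"
    have "periodic L s (e + 1)"
      unfolding periodic_def
    proof (intro allI impI)
      fix z assume "s \<le> z" "z + L \<le> e + 1"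
      show "tw z = tw (z + L)"
      proof (cases "z + L \<le> e")
        case False
        then have "z = e + 1 - L" "z + L = e + 1"
          using \<open>z + L \<le> e + 1\<close> by simp_all
        then show ?thesis
          using h by simp
      qed (use e(1) \<open>s \<le> z\<close> in \<open>simp add: periodic_def\<close>)
    qed
    then have "e + 1 \<le> e"
      unfolding e_def using bound by (intro Greatest_le_nat) auto
    then show False
      by simp
  qed
  with e that show ?thesis
    by blast
qed

lemma periodic_extend_to_maximal_run:
  assumes P: "periodic L i j" and "1 \<le> i" "1 \<le> L" "i + L \<le> j"
  obtains s e where "s \<le> i" "j \<le> e" "maximal_run L s e"
proof -
  obtain s where s: "1 \<le> s" "s \<le> i" "periodic L s j" "s = 1 \<or> tw (s - 1) \<noteq> tw (s - 1 + L)"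
    using periodic_extend_left[OF P assms(2)] by blast
  moreover obtain e where "j \<le> e" "periodic L s e" "tw (e + 1) \<noteq> tw (e + 1 - L)"
    using periodic_extend_right[OF s(3) assms(3)] by blast
  ultimately show ?thesis
    using that assms by (auto simp: maximal_run_def)
qed

lemma maximal_run_ends_LA:
  assumes "maximal_run L s e"
  shows "tw s = LA" "tw e = LA"
proof -
  have s: "1 \<le> s" "s + L \<le> e" and P: "periodic L s e"
    and left: "s = 1 \<or> tw (s - 1) \<noteq> tw (s - 1 + L)"
    and right: "tw (e + 1) \<noteq> tw (e + 1 - L)"
    using assms by (auto simp: maximal_run_def)
  show "tw s = LA"
  proof (rule ccontr)
    assume h: "tw s \<noteq> LA"
    then have "2 \<le> s" "tw (s - 1) = LA"
      using tw_pred_not_LA s by auto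
    moreover have "tw (s + L) \<noteq> LA"
      using P s h by (simp add: periodic_def)
    then have "tw (s + L - 1) = LA"
      using tw_pred_not_LA[of "s + L"] s by simp
    ultimately show False
      using left by (simp add: add.commute)
  qed
  show "tw e = LA"
  proof (rule ccontr)
    assume h: "tw e \<noteq> LA"
    have "tw (e - L) = tw (e - L + L)"
      using P s by (simp add: periodic_def)
    then have "tw (e - L) \<noteq> LA"
      using h s by simp
    then have "tw (e + 1 - L) = LA"
      using tw_Suc_not_LA[of "e - L"] s by (simp add: Suc_diff_le)
    then show False
      using tw_Suc_not_LA[OF h] right by simp
  qed
qed

text \<open>A period-\<open>L\<close> factor of length \<open>\<ge> 3L - 1\<close> desubstitutes to a period-\<open>L'\<close> factor of
  length \<open>\<ge> 3L' - 1\<close>.\<close>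
lemma desubst_length:
  assumes shift: "\<And>q. q0 \<le> q \<Longrightarrow> q + L' \<le> r \<Longrightarrow> sigma_len (q + L') = sigma_len q + L"
    and L': "sigma_len (q0 + L') = sigma_len q0 + L"
    and len: "sigma_len q0 + 3 * L \<le> sigma_len r + 2" and L: "2 \<le> L"
  shows "q0 + 1 + 3 * L' \<le> r + 2"
proof (rule ccontr)
  assume short: "\<not> ?thesis"
  have "sigma_len (q0 + L') < sigma_len r"
    using L' len L by linarith
  then have "q0 + L' < r"
    by simp
  show False
  proof (cases "r < q0 + 2 * L'")
    case True
    define q where "q = r - L'"
    have q: "q0 \<le> q" "q + L' = r" "q < q0 + L'"
      using \<open>q0 + L' < r\<close> True by (simp_all add: q_def)
    then have "sigma_len r = sigma_len q + L" "sigma_len q < sigma_len (q0 + L')"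
      using shift[of q] by simp_all
    then show False
      using L' len L by linarith
  next
    case False
    define q where "q = r - 2 * L'"
    have q: "q0 \<le> q" "q + L' + L' = r" "q + 2 \<le> q0 + L'" "2 \<le> L'"
      using False short by (simp_all add: q_def)
    then have "sigma_len (q + L') = sigma_len q + L" "sigma_len r = sigma_len (q + L') + L"
      using shift[of q] shift[of "q + L'"] by simp_all
    moreover have "sigma_len q + 2 < sigma_len (q + 2)" "sigma_len (q + 2) \<le> sigma_len (q0 + L')"
      using sigma_len_add_gt[of 2 q] q(3) by simp_all
    ultimately show False
      using L' len by linarith
  qed
qed

lemma maximal_run_desubst:
  assumes run: "maximal_run L s e" and L: "2 \<le> L" and len: "s + 3 * L \<le> e + 2"
  obtains q0 r L' where "maximal_run L' (q0 + 1) r" "s = sigma_len q0 + 1" "e = sigma_len r + 1"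
    "sigma_len (q0 + L') = sigma_len q0 + L" "L' < L" "q0 + 1 + 3 * L' \<le> r + 2"
proof -
  have s: "1 \<le> s" "s + L \<le> e" and P: "periodic L s e"
    and left: "s = 1 \<or> tw (s - 1) \<noteq> tw (s - 1 + L)"
    and right: "tw (e + 1) \<noteq> tw (e + 1 - L)"
    using run by (auto simp: maximal_run_def)
  obtain q0 where q0: "s = sigma_len q0 + 1"
    using maximal_run_ends_LA(1)[OF run] s(1) by (rule tw_LA_block_start)
  obtain r where r: "e = sigma_len r + 1"
    using maximal_run_ends_LA(2)[OF run] s by (elim tw_LA_block_start) simp
  have "tw (sigma_len q0 + 1 + L) = LA"
    using P s q0 maximal_run_ends_LA(1)[OF run] by (simp add: periodic_def)
  then obtain L' where L': "sigma_len (q0 + L') = sigma_len q0 + L" "1 \<le> L'"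
    using L by (elim desubst_period) auto
  have P': "periodic L (sigma_len q0 + 1) (sigma_len r + 1)"
    using P q0 r by simp
  note shift = periodic_desubst_shift[OF P' L'(1)]
  have "q0 + 1 = 1 \<or> tw (q0 + 1 - 1) \<noteq> tw (q0 + 1 - 1 + L')"
  proof (cases q0)
    case (Suc q)
    have "tw (sigma_len q0) = last (sig (tw q0))" "tw (sigma_len (q0 + L')) = last (sig (tw (q0 + L')))"
      using tw_block_last[of q] tw_block_last[of "q + L'"] Suc by simp_all
    moreover have "s \<noteq> 1"
      using q0 Suc sigma_len_ge[of q0] by simp
    ultimately have "last (sig (tw q0)) \<noteq> last (sig (tw (q0 + L')))"
      using left q0 L' by (simp add: add.commute add.left_commute)
    then show ?thesis
      by auto
  qed simp
  moreover have "tw (r + 1) \<noteq> tw (r + 1 - L')"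
  proof
    assume eq: "tw (r + 1) = tw (r + 1 - L')"
    have "sigma_len (q0 + L') < sigma_len r"
      using L' len q0 r L by linarith
    then have q: "q0 \<le> r - L'" "r - L' + L' = r"
      by simp_all
    then have "sigma_len r = sigma_len (r - L') + L"
      using shift[of "r - L'"] by simp
    moreover have "tw (Suc (r - L')) = tw (Suc r)"
      using eq q by (simp add: Suc_diff_le)
    then have "tw (sigma_len (r - L') + 2) = tw (sigma_len r + 2)"
      using tw_block_second[of "r - L'"] tw_block_second[of r] by simp
    ultimately show False
      using right r by simp
  qed
  moreover have "q0 + 1 + 3 * L' \<le> r + 2"
    using desubst_length[OF shift L'(1)] len q0 r L by simp
  ultimately have "maximal_run L' (q0 + 1) r"
    using periodic_desubst[OF P' L'(1)] L'(2) by (simp add: maximal_run_def)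
  then show ?thesis
    using that q0 r L' desubst_period_less[OF L'(1) L] \<open>q0 + 1 + 3 * L' \<le> r + 2\<close> by blast
qed

lemma maximal_run_period_1:
  assumes "maximal_run 1 s e"
  obtains x where "s = (sigma_len ^^ 4) x + 7" "e = s + 1"
proof -
  have s: "1 \<le> s" "s + 1 \<le> e" and P: "periodic 1 s e"
    using assms by (auto simp: maximal_run_def)
  have "tw s = tw (s + 1)"
    using P s by (simp add: periodic_def)
  then have a: "tw s = LA" "tw (s + 1) = LA"
    using tw_Suc_not_LA[of s] by (metis Suc_eq_plus1)+
  have e: "e = s + 1"
  proof (rule ccontr)
    assume "e \<noteq> s + 1"
    then have "tw (s + 1) = tw (s + 2)"
      using P s by (simp add: periodic_def numeral_2_eq_2)
    then show False
      using tw_no_LA_LA_LA[OF a s(1)] a by simp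
  qed
  obtain q where q: "s = sigma_len q + 1"
    using a(1) s(1) by (rule tw_LA_block_start)
  have c: "tw (Suc q) = LC"
    using tw_desubst[of q] a(2) q by (simp add: numeral_2_eq_2)
  then have "tw (Suc q) \<noteq> LA" "1 \<le> Suc q"
    by simp_all
  then obtain r where r: "Suc q = sigma_len r + 2" "sigma_len (Suc r) = sigma_len r + 2"
    "tw (Suc r) \<noteq> LC"
    by (rule tw_not_LA)
  then have b: "tw (Suc r) = LB"
    using tw_block_second[of r] c by (cases "tw (Suc r)") auto
  then have "tw (Suc r) \<noteq> LA" "1 \<le> Suc r"
    by simp_all
  then obtain u where u: "Suc r = sigma_len u + 2" "sigma_len (Suc u) = sigma_len u + 2"
    "tw (Suc u) \<noteq> LC"
    by (rule tw_not_LA)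
  then have "tw (Suc u) = LA" "1 \<le> Suc u"
    using tw_block_second[of u] b by (cases "tw (Suc u)") auto
  then obtain v where v: "Suc u = sigma_len v + 1"
    by (rule tw_LA_block_start)
  have "sigma_len (Suc (sigma_len (sigma_len v))) = sigma_len (sigma_len (sigma_len v)) + 2"
    using sigma_len_Suc[of "sigma_len (sigma_len v)"] tw_block_start[of "sigma_len v"] by simp
  then have "q = sigma_len (sigma_len (sigma_len v)) + 3"
    using r(1) u(1) v by simp
  moreover have "sigma_len ((sigma_len ^^ 3) v + 3) = (sigma_len ^^ 4) v + sigma_len 3"
    using sigma_len_funpow_add[of 3 3 v] by (simp add: trib_values)
  moreover have "sigma_len 3 = 6"
    using sigma_len_gamma_hi[of 2] by (simp add: gamma_hi_values numeral_eq_Suc gamma_hi_Suc)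
  ultimately have "s = (sigma_len ^^ 4) v + 7"
    using q by (simp add: numeral_3_eq_3)
  then show ?thesis
    using that e by blast
qed

text \<open>The first maximal run of period \<open>t\<^sub>k\<close> is \<open>x\<^sub>s\<cdots>x\<^sub>s\<^sub>+\<^sub>l\<^sub>-\<^sub>1\<close> with \<open>s = run_start k\<close> and
  \<open>l = run_length k\<close>; for \<open>k = 0\<close> it is \<open>x\<^sub>7x\<^sub>8 = aa\<close>.\<close>
definition run_start :: "nat \<Rightarrow> nat" where
  "run_start k = trib (k + 2) + trib (k + 1) + 1"

definition run_length :: "nat \<Rightarrow> nat" where
  "run_length k = trib k + gamma_hi (Suc k)"

lemma run_start_mono: "k \<le> k' \<Longrightarrow> run_start k \<le> run_start k'"
  unfolding run_start_def by (intro add_mono trib_mono) auto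

text \<open>\<open>\<sigma>\<close> maps the run of period \<open>t\<^sub>k\<close> associated with \<open>x\<close> onto the run of period
  \<open>t\<^sub>k\<^sub>+\<^sub>1\<close> associated with \<open>x\<close>.\<close>
lemma sigma_len_run:
  fixes k x :: nat
  defines "q0 \<equiv> (sigma_len ^^ (k + 4)) x + trib (k + 2) + trib (k + 1)"
  shows "sigma_len q0 + 1 = (sigma_len ^^ (k + 5)) x + run_start (k + 1)"
    and "sigma_len (q0 + trib k) = sigma_len q0 + trib (k + 1)"
    and "sigma_len (q0 + run_length k) + 1
           = (sigma_len ^^ (k + 5)) x + run_start (k + 1) + run_length (k + 1) - 1"
proof -
  have t3: "trib (k + 3) = trib (k + 2) + trib (k + 1) + trib k"
    and t4: "trib (k + 4) = trib (k + 3) + trib (k + 2) + trib (k + 1)"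
    using trib_rec[of k] trib_rec[of "k + 1"] by (simp_all add: eval_nat_numeral)
  have j: "3 \<le> k + 4" "Suc (k + 4) = k + 5"
    by simp_all
  have "sigma_len (trib (k + 2) + trib (k + 1)) = trib (k + 3) + trib (k + 2)"
    using sigma_len_trib_add[of "k + 2" "trib (k + 1)"] sigma_len_trib[of "k + 1"]
    by (simp add: eval_nat_numeral)
  then have A: "sigma_len q0 = (sigma_len ^^ (k + 5)) x + trib (k + 3) + trib (k + 2)"
    unfolding q0_def add.assoc using sigma_len_funpow_add[OF j(1), of "trib (k + 2) + trib (k + 1)" x] t4
    by (simp add: eval_nat_numeral)
  then show "sigma_len q0 + 1 = (sigma_len ^^ (k + 5)) x + run_start (k + 1)"
    by (simp add: run_start_def add.commute add.left_commute eval_nat_numeral)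
  have "q0 + trib k = (sigma_len ^^ (k + 4)) x + trib (k + 3)"
    using t3 by (simp add: q0_def eval_nat_numeral)
  then have "sigma_len (q0 + trib k) = (sigma_len ^^ (k + 5)) x + trib (k + 4)"
    using sigma_len_funpow_add[OF j(1), of "trib (k + 3)" x] t4 sigma_len_trib[of "k + 3"]
    by (simp add: eval_nat_numeral)
  then show "sigma_len (q0 + trib k) = sigma_len q0 + trib (k + 1)"
    using A t4 by (simp add: eval_nat_numeral)
  have le: "gamma_hi (Suc k) \<le> trib (k + 2)"
    using gamma_hi_le_trib[of "Suc k"] by (simp add: eval_nat_numeral)
  have "q0 + run_length k = (sigma_len ^^ (k + 4)) x + (trib (k + 3) + gamma_hi (Suc k))"
    using t3 by (simp add: q0_def run_length_def eval_nat_numeral)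
  moreover have "trib (k + 3) + gamma_hi (Suc k) \<le> trib (k + 4)"
    using t4 le by (simp add: eval_nat_numeral)
  moreover have "sigma_len (trib (k + 3) + gamma_hi (Suc k)) = trib (k + 4) + sigma_len (gamma_hi (Suc k))"
    using sigma_len_trib_add[of "k + 3" "gamma_hi (Suc k)"] le by (simp add: eval_nat_numeral)
  ultimately have "sigma_len (q0 + run_length k)
      = (sigma_len ^^ (k + 5)) x + trib (k + 4) + sigma_len (gamma_hi (Suc k))"
    using sigma_len_funpow_add[OF j(1), of "trib (k + 3) + gamma_hi (Suc k)" x]
    by (simp add: eval_nat_numeral)
  moreover have "sigma_len (gamma_hi (Suc k)) + 1 = gamma_hi (k + 2)"
    using sigma_len_gamma_hi[of "Suc k"] by (simp add: eval_nat_numeral)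
  moreover have "1 \<le> gamma_hi (k + 2)"
    using trib_pos[of "Suc k"] by (simp add: gamma_hi_Suc eval_nat_numeral)
  ultimately show "sigma_len (q0 + run_length k) + 1
      = (sigma_len ^^ (k + 5)) x + run_start (k + 1) + run_length (k + 1) - 1"
    using t4 by (simp add: run_start_def run_length_def eval_nat_numeral)
qed

text \<open>The maximal runs of exponent at least \<open>3 - 1/L\<close> are the images of a single run of
  period \<open>1\<close> (an occurrence of \<open>aa\<close>) under iterates of \<open>\<sigma>\<close>.\<close>
theorem maximal_run_classification:
  assumes "maximal_run L s e" "s + 3 * L \<le> e + 2"
  obtains k x where "L = trib k" "s = (sigma_len ^^ (k + 4)) x + run_start k"
    "e = s + run_length k - 1"
  using assms
proof (induction L arbitrary: s e thesis rule: less_induct)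
  case (less L)
  show ?case
  proof (cases "L = 1")
    case True
    then obtain x where "s = (sigma_len ^^ 4) x + 7" "e = s + 1"
      using maximal_run_period_1 less.prems(2) by blast
    moreover have "run_start 0 = 7" "run_length 0 = 2"
      by (simp_all add: run_start_def run_length_def gamma_hi_Suc)
    ultimately show ?thesis
      using less.prems(1)[of 0 x] True by simp
  next
    case False
    then have L: "2 \<le> L"
      using less.prems(2) by (simp add: maximal_run_def)
    obtain q0 r L' where d: "maximal_run L' (q0 + 1) r" "s = sigma_len q0 + 1" "e = sigma_len r + 1"
      "sigma_len (q0 + L') = sigma_len q0 + L" "L' < L" "q0 + 1 + 3 * L' \<le> r + 2"
      using maximal_run_desubst[OF less.prems(2) L less.prems(3)] by blast
    obtain k x where kx: "L' = trib k" "q0 + 1 = (sigma_len ^^ (k + 4)) x + run_start k"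
      "r = q0 + 1 + run_length k - 1"
      using less.IH[OF d(5) _ d(1) d(6)] by blast
    have q0: "q0 = (sigma_len ^^ (k + 4)) x + trib (k + 2) + trib (k + 1)"
      using kx(2) by (simp add: run_start_def)
    have r: "r = q0 + run_length k"
      using kx(3) by (simp add: run_length_def)
    note image = sigma_len_run[of k x, folded q0]
    have "L = trib (k + 1)"
      using d(4) image(2) kx(1) by simp
    moreover have "s = (sigma_len ^^ (k + 1 + 4)) x + run_start (k + 1)"
      using d(2) image(1) by (simp add: eval_nat_numeral)
    moreover have "e = s + run_length (k + 1) - 1"
      using d(3) d(2) image(1) image(3) r by simp
    ultimately show ?thesis
      using less.prems(1) by blast
  qed
qed

lemma periodic_sigma_shift:
  assumes P: "periodic L' (q0 + 1) r"
  shows "q0 \<le> q \<Longrightarrow> q + L' \<le> r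
    \<Longrightarrow> sigma_len (q + L') = sigma_len q + (sigma_len (q0 + L') - sigma_len q0)"
proof (induction q rule: dec_induct)
  case base
  show ?case
    using sigma_len_add_ge[of q0 L'] by simp
next
  case (step n)
  then have "tw (Suc n) = tw (Suc n + L')"
    using P by (simp add: periodic_def)
  then show ?case
    using step sigma_len_add_ge[of q0 L'] by (simp add: sigma_len_Suc)
qed

lemma periodic_sigma:
  assumes P: "periodic L' (q0 + 1) r" and le: "q0 + L' \<le> r"
  shows "periodic (sigma_len (q0 + L') - sigma_len q0) (sigma_len q0 + 1) (sigma_len r + 1)"
proof -
  define L where "L = sigma_len (q0 + L') - sigma_len q0"
  note shift = periodic_sigma_shift[OF P, folded L_def]
  define qm where "qm = r - L'"
  have qm: "sigma_len r = sigma_len qm + L" "q0 \<le> qm"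
    using shift[of qm] le by (simp_all add: qm_def)
  show ?thesis
    unfolding L_def[symmetric] periodic_def
  proof (intro allI impI)
    fix y assume y: "sigma_len q0 + 1 \<le> y" "y + L \<le> sigma_len r + 1"
    then obtain q where q: "sigma_len q < y" "y \<le> sigma_len (Suc q)"
      using block_containing[of y] by auto
    then have "sigma_len q0 < sigma_len (Suc q)" "sigma_len q \<le> sigma_len qm"
      using y qm by linarith+
    then have "q0 \<le> q" "q \<le> qm"
      by simp_all
    show "tw y = tw (y + L)"
    proof (cases "q < qm")
      case True
      then have same: "tw (Suc q) = tw (Suc q + L')" and iq: "sigma_len (q + L') = sigma_len q + L"
        using P \<open>q0 \<le> q\<close> shift[of q] qm_def le by (simp_all add: periodic_def)
      define i where "i = y - sigma_len q - 1"
      have i: "y = sigma_len q + 1 + i" "i < length (sig (tw (Suc q)))"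
        using q by (auto simp: i_def sigma_len_Suc)
      then show ?thesis
        using tw_block[OF i(2)] tw_block[of i "q + L'"] same iq
        by (simp add: add.commute add.left_commute)
    next
      case False
      then have "y = sigma_len q + 1" "y + L = sigma_len r + 1"
        using q y qm \<open>q \<le> qm\<close> by auto
      then show ?thesis
        using tw_block_start[of q] tw_block_start[of r] by simp
    qed
  qed
qed

lemma periodic_run: "periodic (trib k) (run_start k) (run_start k + run_length k - 1)"
proof (induction k)
  case 0
  have "tw 7 = LA"
    using tw_trib_word[of 7 3] by (simp add: trib_values trib_word_small)
  moreover have "tw 8 = LA"
    using tw_trib_add[of 1 3] tw_1 by (simp add: trib_values gamma_hi_values)
  ultimately show ?case
    by (auto simp: periodic_def run_start_def run_length_def gamma_hi_Suc)
next
  case (Suc k)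
  define q0 where "q0 = trib (k + 2) + trib (k + 1)"
  have q0': "q0 = (sigma_len ^^ (k + 4)) 0 + trib (k + 2) + trib (k + 1)"
    by (simp add: q0_def)
  note image = sigma_len_run[of k 0, folded q0']
  have "q0 + 1 = run_start k" "run_start k + run_length k - 1 = q0 + run_length k"
    using trib_pos[of k] by (simp_all add: q0_def run_start_def run_length_def)
  then have "periodic (trib k) (q0 + 1) (q0 + run_length k)"
    using Suc by simp
  moreover have "q0 + trib k \<le> q0 + run_length k"
    by (simp add: run_length_def)
  ultimately have "periodic (sigma_len (q0 + trib k) - sigma_len q0) (sigma_len q0 + 1)
      (sigma_len (q0 + run_length k) + 1)"
    by (rule periodic_sigma)
  then show ?case
    using image by simp
qed

section \<open>Cubes\<close>

definition cube_period :: "nat \<Rightarrow> nat \<Rightarrow> bool" where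
  "cube_period L n \<longleftrightarrow> 1 \<le> L \<and> 3 * L \<le> n \<and> periodic L (n + 1 - 3 * L) n"

lemma periodic_in_run:
  assumes "periodic L i n" "1 \<le> i" "1 \<le> L" "i + 3 * L \<le> n + 1"
  obtains k x where "L = trib k" "(sigma_len ^^ (k + 4)) x + run_start k \<le> i"
    "n \<le> (sigma_len ^^ (k + 4)) x + run_start k + run_length k - 1"
proof -
  obtain s e where se: "s \<le> i" "n \<le> e" "maximal_run L s e"
    using periodic_extend_to_maximal_run[OF assms(1-3)] assms(3,4) by auto
  moreover have "s + 3 * L \<le> e + 2"
    using se assms(4) by simp
  ultimately show ?thesis
    using that by (elim maximal_run_classification) auto
qed

lemma cube_period_in_run:
  assumes "cube_period L n"
  obtains k x where "L = trib k" "(sigma_len ^^ (k + 4)) x + run_start k + 3 * L \<le> n + 1"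
    "n + 1 \<le> (sigma_len ^^ (k + 4)) x + run_start k + run_length k"
proof -
  have L: "1 \<le> L" "3 * L \<le> n" and P: "periodic L (n + 1 - 3 * L) n"
    using assms by (auto simp: cube_period_def)
  then obtain k x where kx: "L = trib k" "(sigma_len ^^ (k + 4)) x + run_start k \<le> n + 1 - 3 * L"
    "n \<le> (sigma_len ^^ (k + 4)) x + run_start k + run_length k - 1"
    by (elim periodic_in_run) auto
  moreover have "1 \<le> run_start k"
    by (simp add: run_start_def)
  ultimately show ?thesis
    using that[of k x] L by linarith
qed

lemma run_imp_cube_period:
  assumes "run_start k + 3 * trib k \<le> n + 1" "n + 1 \<le> run_start k + run_length k"
  shows "cube_period (trib k) n"
proof -
  have "periodic (trib k) (n + 1 - 3 * trib k) n"
    using periodic_run[of k] by (rule periodic_mono) (use assms in auto)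
  moreover have "1 \<le> run_start k"
    by (simp add: run_start_def)
  ultimately show ?thesis
    using assms trib_pos[of k] by (auto simp: cube_period_def)
qed

lemma run_length_less: "run_length k < 3 * trib (Suc k)"
  using gamma_hi_eq[of "Suc k"] trib_Suc_Suc[of k] trib_mono[of "k - 1" k] trib_mono[of k "Suc k"]
  by (simp add: run_length_def)

lemma periodic_factor_shift:
  assumes P: "periodic L i n" and L: "1 \<le> L" and j: "i \<le> j" "j + L \<le> n + 1"
    and eq: "factor j L = factor i L"
  shows "periodic ((j - i) mod L) i n"
  unfolding periodic_def
proof (intro allI impI)
  define r where "r = (j - i) mod L"
  have shift: "tw (i + (r + b) mod L) = tw (i + b)" if "b < L" for b
  proof -
    have "tw (i + (j - i + b)) = tw (i + (j - i + b) mod L)"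
      using periodic_mod[OF P L, of "j - i + b"] that j by simp
    moreover have "(j - i + b) mod L = (r + b) mod L"
      by (simp add: r_def mod_add_left_eq)
    moreover have "tw (j + b) = tw (i + b)"
      using eq that by (simp add: factor_eq_iff)
    ultimately show ?thesis
      using j by simp
  qed
  fix y assume y: "i \<le> y" "y + r \<le> n"
  define z where "z = y - i"
  have "tw (y + r) = tw (i + (z + r) mod L)"
    using periodic_mod[OF P L, of "z + r"] y by (simp add: z_def add.commute add.left_commute)
  also have "(z + r) mod L = (r + z mod L) mod L"
    by (simp add: mod_add_right_eq add.commute)
  also have "tw (i + (r + z mod L) mod L) = tw (i + z)"
    using shift[of "z mod L"] periodic_mod[OF P L, of z] L y by (simp add: z_def)
  finally show "tw y = tw (y + r)"
    using y by (simp add: z_def)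
qed

text \<open>The two periods \<open>L\<close> and \<open>(j - i) mod L\<close> would both be Tribonacci numbers whose runs
  cover the cube, which is too long for the run of the smaller one.\<close>
lemma cube_no_inner_occurrence:
  assumes c: "cube_period L n" and j: "n + 1 - 3 * L < j" "j < n + 1 - L" "j \<noteq> n + 1 - 2 * L"
  shows "factor j L \<noteq> factor (n + 1 - 3 * L) L"
proof
  define i where "i = n + 1 - 3 * L"
  assume eq: "factor j L = factor (n + 1 - 3 * L) L"
  have L: "1 \<le> L" and P: "periodic L i n" and i: "1 \<le> i" "i + 3 * L = n + 1"
    using c by (auto simp: cube_period_def i_def)
  define r where "r = (j - i) mod L"
  have Pr: "periodic r i n"
    using periodic_factor_shift[OF P L, of j] eq j i by (simp add: i_def r_def)
  have d: "j - i \<noteq> L" "0 < j - i" "j - i < 2 * L"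
    using j i by (auto simp: i_def)
  have "r \<noteq> 0"
  proof
    assume "r = 0"
    then obtain c where c: "j - i = L * c"
      by (auto simp: r_def)
    then have "c < 2"
      using d(3) by (simp add: mult.commute)
    then show False
      using c d(1,2) by (auto simp: less_2_cases_iff)
  qed
  have "r < L"
    using L by (simp add: r_def)
  obtain k where k: "L = trib k"
    using periodic_in_run[OF P i(1) L] i by auto
  obtain k' x' where k': "r = trib k'" "(sigma_len ^^ (k' + 4)) x' + run_start k' \<le> i"
    "n \<le> (sigma_len ^^ (k' + 4)) x' + run_start k' + run_length k' - 1"
    using periodic_in_run[OF Pr i(1)] \<open>r \<noteq> 0\<close> \<open>r < L\<close> i by auto
  have "k' < k"
    using k k' \<open>r < L\<close> by simp
  then have "trib (Suc k') \<le> L"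
    using k trib_mono by simp
  moreover have "3 * L \<le> run_length k'"
    using k' i by linarith
  ultimately show False
    using run_length_less[of k'] by linarith
qed

definition occs_before :: "letter list \<Rightarrow> nat \<Rightarrow> nat set" where
  "occs_before w x = {j. j < x \<and> occurs_at w j}"

lemma finite_occs_before [simp]: "finite (occs_before w x)"
  unfolding occs_before_def by simp

lemma nth_occ_iff: "nth_occ w p i \<longleftrightarrow> 1 \<le> p \<and> occurs_at w i \<and> card (occs_before w i) = p - 1"
  by (simp add: nth_occ_def occs_before_def)

lemma card_occs_before_next:
  assumes "occurs_at w i" "i < i'" "\<And>j. i < j \<Longrightarrow> j < i' \<Longrightarrow> \<not> occurs_at w j"
  shows "card (occs_before w i') = card (occs_before w i) + 1"
proof -
  have "occs_before w i' = insert i (occs_before w i)"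
    using assms unfolding occs_before_def by (auto simp: not_less_eq [symmetric] linorder_neq_iff)
  moreover have "i \<notin> occs_before w i"
    by (simp add: occs_before_def)
  ultimately show ?thesis
    by simp
qed

lemma periodic_of_square:
  assumes "factor a L = factor (a + L) L" "a \<le> y" "y < a + L"
  shows "tw y = tw (y + L)"
  using assms(1)[unfolded factor_eq_iff, rule_format, of "y - a"] assms(2,3)
  by (simp add: add.commute add.left_commute)

lemma cube_ending_at_imp_cube_period:
  assumes "cube_ending_at w p n"
  defines "L \<equiv> length w"
  shows "cube_period L n" "w = factor (n + 1 - 3 * L) L"
    "p = card (occs_before w (n + 1 - 3 * L)) + 1"
proof -
  obtain i where i: "nth_occ w p i" "nth_occ w (p + 1) (i + L)" "nth_occ w (p + 2) (i + 2 * L)"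
    "i + 3 * L - 1 = n" and "w \<noteq> []"
    using assms unfolding cube_ending_at_def L_def by blast
  then have L: "1 \<le> L"
    by (simp add: L_def Suc_le_eq)
  have occ: "1 \<le> i" "factor i L = w" "factor (i + L) L = w" "factor (i + L + L) L = w"
    using i(1-3) by (auto simp: nth_occ_iff occurs_at_iff_factor L_def mult_2 add.assoc)
  have n: "3 * L \<le> n" "i = n + 1 - 3 * L"
    using i(4) occ(1) L by linarith+
  have "periodic L i n"
    unfolding periodic_def
  proof (intro allI impI)
    fix y assume y: "i \<le> y" "y + L \<le> n"
    show "tw y = tw (y + L)"
    proof (cases "y < i + L")
      case True
      then show ?thesis
        using periodic_of_square[of i L y] occ y by simp
    next
      case False
      then show ?thesis
        using periodic_of_square[of "i + L" L y] occ y i(4) by simp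
    qed
  qed
  then show "cube_period L n"
    using L n by (simp add: cube_period_def)
  show "w = factor (n + 1 - 3 * L) L" "p = card (occs_before w (n + 1 - 3 * L)) + 1"
    using occ i(1) n by (auto simp: nth_occ_iff)
qed

lemma cube_period_imp_cube_ending_at:
  assumes c: "cube_period L n"
  defines "i \<equiv> n + 1 - 3 * L"
  defines "w \<equiv> factor i L"
  shows "cube_ending_at w (card (occs_before w i) + 1) n"
proof -
  have L: "1 \<le> L" and P: "periodic L i n" and i: "1 \<le> i" "i + 3 * L = n + 1"
    using c by (auto simp: cube_period_def i_def)
  have "factor (i + L) L = w" "factor (i + 2 * L) L = w"
    using P i unfolding w_def factor_eq_iff periodic_def
    by (auto simp: mult_2 add.commute add.left_commute)
  then have occ: "occurs_at w i" "occurs_at w (i + L)" "occurs_at w (i + 2 * L)"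
    using i by (simp_all add: occurs_at_iff_factor w_def)
  have none: "\<not> occurs_at w j" if "i < j" "j < i + 2 * L" "j \<noteq> i + L" for j
    using cube_no_inner_occurrence[OF c, of j] that i
    by (auto simp: occurs_at_iff_factor w_def i_def)
  have "card (occs_before w (i + L)) = card (occs_before w i) + 1"
    using occ L none by (intro card_occs_before_next) auto
  moreover have "card (occs_before w (i + 2 * L)) = card (occs_before w (i + L)) + 1"
    using occ L none by (intro card_occs_before_next) auto
  moreover have "length w = L"
    by (simp add: w_def)
  moreover have "w \<noteq> []"
    using L calculation by auto
  ultimately show ?thesis
    unfolding cube_ending_at_def using occ i
    by (intro conjI exI[of _ i]) (auto simp: nth_occ_iff)
qed

lemma dcube_eq_card_cube_period: "dcube n = card {L. cube_period L n}"
proof -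
  define f where "f L = (factor (n + 1 - 3 * L) L,
      card (occs_before (factor (n + 1 - 3 * L) L) (n + 1 - 3 * L)) + 1)" for L
  have "{(w, p). cube_ending_at w p n} = f ` {L. cube_period L n}"
  proof (intro set_eqI iffI)
    fix z assume "z \<in> {(w, p). cube_ending_at w p n}"
    then obtain w p where "z = (w, p)" "cube_ending_at w p n"
      by blast
    then show "z \<in> f ` {L. cube_period L n}"
      using cube_ending_at_imp_cube_period[of w p n] unfolding f_def
      by (intro image_eqI[of _ _ "length w"]) auto
  next
    fix z assume "z \<in> f ` {L. cube_period L n}"
    then show "z \<in> {(w, p). cube_ending_at w p n}"
      using cube_period_imp_cube_ending_at unfolding f_def by auto
  qed
  moreover have "inj f"
    unfolding f_def by (intro injI) (metis length_factor prod.inject)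
  ultimately show ?thesis
    unfolding dcube_def by (simp add: card_image inj_on_subset)
qed

lemma finite_cube_period: "finite {L. cube_period L n}"
  by (rule finite_subset[of _ "{..n}"]) (auto simp: cube_period_def)

section \<open>The number of cubes ending at a position\<close>

lemma run_values:
  "run_length 0 = 2" "run_length 1 = 5" "run_length 2 = 11" "run_length 3 = 21"
  "run_length 4 = 40" "run_length 5 = 75"
  "run_start 3 = 38" "run_start 4 = 69" "run_start 5 = 126"
  by (simp_all add: run_length_def run_start_def trib_values gamma_hi_values
      flip: One_nat_def numeral_2_eq_2)

lemma dcube_eq_0: "n \<le> 57 \<Longrightarrow> dcube n = 0"
proof -
  assume n: "n \<le> 57"
  have "\<not> cube_period L n" for L
  proof
    assume "cube_period L n"
    then obtain k x where kx: "L = trib k" "(sigma_len ^^ (k + 4)) x + run_start k + 3 * L \<le> n + 1"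
      "n + 1 \<le> (sigma_len ^^ (k + 4)) x + run_start k + run_length k"
      by (rule cube_period_in_run)
    then have "3 * trib k \<le> run_length k"
      by linarith
    then have k: "3 \<le> k"
      using run_values trib_values by (cases "k < 3") (auto simp: less_Suc_eq numeral_eq_Suc)
    then have "run_start 3 \<le> run_start k" "trib 3 \<le> trib k"
      by (simp_all add: run_start_mono trib_mono)
    then show False
      using kx n by (simp add: run_values trib_values)
  qed
  then show "dcube n = 0"
    by (simp add: dcube_eq_card_cube_period)
qed

lemma periodic_trib_add_iff:
  assumes "1 \<le> a" "b \<le> gamma_hi j"
  shows "periodic L (trib j + a) (trib j + b) \<longleftrightarrow> periodic L a b"
proof -
  have shift: "tw (trib j + y) = tw y" if "a \<le> y" "y \<le> b" for y
    using tw_trib_add assms that by simp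
  show ?thesis
    unfolding periodic_def
  proof (intro iffI allI impI)
    fix y assume "\<forall>y. trib j + a \<le> y \<longrightarrow> y + L \<le> trib j + b \<longrightarrow> tw y = tw (y + L)"
      and y: "a \<le> y" "y + L \<le> b"
    then have "tw (trib j + y) = tw (trib j + y + L)"
      by simp
    then show "tw y = tw (y + L)"
      using shift[of y] shift[of "y + L"] y by (simp add: add.assoc)
  next
    fix y assume "\<forall>y. a \<le> y \<longrightarrow> y + L \<le> b \<longrightarrow> tw y = tw (y + L)"
      and y: "trib j + a \<le> y" "y + L \<le> trib j + b"
    then have "tw (y - trib j) = tw (y - trib j + L)"
      by simp
    then show "tw y = tw (y + L)"
      using shift[of "y - trib j"] shift[of "y - trib j + L"] y by (simp add: add.assoc)
  qed
qed

lemma cube_period_trib_add_iff: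
  assumes "n \<le> gamma_hi j" "3 * L \<le> n"
  shows "cube_period L (trib j + n) \<longleftrightarrow> cube_period L n"
proof -
  have "trib j + n + 1 - 3 * L = trib j + (n + 1 - 3 * L)"
    using assms by simp
  then show ?thesis
    using periodic_trib_add_iff[of "n + 1 - 3 * L" n j L] assms by (auto simp: cube_period_def)
qed

lemma early_run_start:
  assumes "(sigma_len ^^ (k + 4)) x + run_start k \<le> trib (k + 3)"
  shows "x = 0"
proof (rule ccontr)
  assume "x \<noteq> 0"
  then have "trib 0 \<le> x"
    by simp
  then have "(sigma_len ^^ (k + 4)) (trib 0) \<le> (sigma_len ^^ (k + 4)) x"
    by (simp only: funpow_sigma_len_le_iff)
  then have "trib (k + 4) \<le> (sigma_len ^^ (k + 4)) x"
    by (simp only: funpow_sigma_len_trib add_0)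
  moreover have "trib (k + 3) < trib (k + 4)"
    by simp
  ultimately show False
    using assms by linarith
qed

lemma early_run_end:
  assumes "k' < k" "(sigma_len ^^ (k' + 4)) x + run_start k' \<le> trib (k + 3)"
  shows "(sigma_len ^^ (k' + 4)) x + run_start k' + run_length k' \<le> gamma_hi (k + 3) + 1"
proof -
  define j where "j = k' + 4"
  have tj: "(sigma_len ^^ j) (trib (k + 3 - j)) = trib (k + 3)"
    using funpow_sigma_len_trib[of j "k + 3 - j"] assms(1) by (simp add: j_def eval_nat_numeral)
  then have "(sigma_len ^^ j) x < (sigma_len ^^ j) (trib (k + 3 - j))"
    using assms(2) by (simp add: j_def run_start_def)
  then have "(sigma_len ^^ j) (x + 1) \<le> trib (k + 3)"
    using tj by (metis Suc_eq_plus1 Suc_leI funpow_sigma_len_le_iff funpow_sigma_len_less_iff)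
  moreover have "(sigma_len ^^ j) x + trib (k' + 3) \<le> (sigma_len ^^ j) (x + 1)"
    using funpow_sigma_len_add_1_ge[of j x] by (simp add: j_def eval_nat_numeral)
  moreover have "trib (k' + 3) = trib (k' + 2) + trib (k' + 1) + trib k'"
    by (rule trib_rec)
  moreover have "gamma_hi (Suc k') \<le> gamma_hi k"
    using assms(1) by (simp add: gamma_hi_mono)
  moreover have "gamma_hi (k + 3) = trib (k + 3) + gamma_hi k"
    using gamma_hi_rec[of "k + 3"] by simp
  ultimately show ?thesis
    unfolding j_def run_start_def run_length_def by linarith
qed

text \<open>A cube ending in \<open>(gamma_hi (k + 3), gamma_hi (k + 4)]\<close> that is not a translate of a
  cube in the prefix belongs to the first run of period \<open>t\<^sub>k\<close>: runs of larger period start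
  after \<open>t\<^sub>k\<^sub>+\<^sub>3\<close> and runs of smaller period end too early.\<close>
lemma long_cube_period:
  assumes n: "gamma_hi (k + 3) < n" and c: "cube_period L n" and long: "n < trib (k + 3) + 3 * L"
  shows "L = trib k" "run_start k + 3 * trib k \<le> n + 1" "n + 1 \<le> run_start k + run_length k"
proof -
  obtain k' x where kx: "L = trib k'" "(sigma_len ^^ (k' + 4)) x + run_start k' + 3 * L \<le> n + 1"
    "n + 1 \<le> (sigma_len ^^ (k' + 4)) x + run_start k' + run_length k'"
    using c by (rule cube_period_in_run)
  have start: "(sigma_len ^^ (k' + 4)) x + run_start k' \<le> trib (k + 3)"
    using kx(2) long by linarith
  consider "k + 1 \<le> k'" | "k' = k" | "k' < k"
    by linarith
  then have "k' = k \<and> x = 0"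
  proof cases
    case 1
    then have "run_start (k + 1) \<le> run_start k'"
      by (rule run_start_mono)
    then show ?thesis
      using start trib_rec[of k] by (simp add: run_start_def eval_nat_numeral)
  next
    case 2
    then show ?thesis
      using early_run_start start by simp
  next
    case 3
    then show ?thesis
      using early_run_end[OF 3 start] kx(3) n by simp
  qed
  then show "L = trib k" "run_start k + 3 * trib k \<le> n + 1" "n + 1 \<le> run_start k + run_length k"
    using kx by simp_all
qed

lemma run_end_less: "run_start k + run_length k < trib (k + 3) + 3 * trib k + 1"
  using trib_rec[of k] gamma_hi_Suc_less[of k] by (simp add: run_start_def run_length_def)

lemma dcube_rec:
  assumes n: "gamma_hi (k + 3) < n" "n \<le> gamma_hi (k + 4)"
  shows "dcube n = dcube (n - trib (k + 3))
    + (if run_start k + 3 * trib k \<le> n + 1 \<and> n + 1 \<le> run_start k + run_length k then 1 else 0)"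
proof -
  let ?t = "trib (k + 3)"
  let ?new = "run_start k + 3 * trib k \<le> n + 1 \<and> n + 1 \<le> run_start k + run_length k"
  have hi: "gamma_hi (k + 3) = ?t + gamma_hi k" "gamma_hi (k + 4) = gamma_hi (k + 3) + ?t"
    using gamma_hi_rec[of "k + 3"] gamma_hi_Suc[of "k + 3"] by (simp_all add: eval_nat_numeral)
  then have t: "?t < n" "n - ?t \<le> gamma_hi (k + 3)"
    using n by simp_all
  define old where "old = {L. cube_period L n \<and> 3 * L \<le> n - ?t}"
  define new where "new = {L. cube_period L n \<and> n < ?t + 3 * L}"
  have "{L. cube_period L n} = old \<union> new" "old \<inter> new = {}"
    using t(1) by (auto simp: old_def new_def)
  moreover have "finite old" "finite new"
    using finite_cube_period[of n] by (auto simp: old_def new_def)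
  ultimately have "dcube n = card old + card new"
    by (simp add: dcube_eq_card_cube_period card_Un_disjoint)
  moreover have "old = {L. cube_period L (n - ?t)}"
  proof -
    have "cube_period L n \<and> 3 * L \<le> n - ?t \<longleftrightarrow> cube_period L (n - ?t)" for L
      using cube_period_trib_add_iff[OF t(2), of L] t(1) by (auto simp: cube_period_def)
    then show ?thesis
      by (simp add: old_def)
  qed
  moreover have "new = (if ?new then {trib k} else {})"
  proof -
    have "L \<in> new \<longleftrightarrow> ?new \<and> L = trib k" for L
      using long_cube_period[OF n(1), of L] run_imp_cube_period[of k n] run_end_less[of k]
      unfolding new_def by auto
    then show ?thesis
      by auto
  qed
  ultimately show ?thesis
    by (simp add: dcube_eq_card_cube_period)
qed

lemma dcube_Gamma7:
  assumes "51 < n" "n \<le> 95"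
  shows "dcube n = (if n = 58 then 1 else 0)"
proof -
  have "dcube n = dcube (n - 44) + (if 58 \<le> n \<and> n \<le> 58 then 1 else 0)"
    using dcube_rec[of 3 n] assms by (simp add: gamma_hi_values trib_values run_values)
  then show ?thesis
    using assms dcube_eq_0[of "n - 44"] by simp
qed

lemma dcube_Gamma8:
  assumes "95 < n" "n \<le> 176"
  shows "dcube n = (if n = 107 \<or> n = 108 \<or> n = 139 then 1 else 0)"
proof -
  have "dcube n = dcube (n - 81) + (if 107 \<le> n \<and> n \<le> 108 then 1 else 0)"
    using dcube_rec[of 4 n] assms by (simp add: gamma_hi_values trib_values run_values)
  moreover have "dcube (n - 81) = (if n = 139 then 1 else 0)"
    using dcube_eq_0[of "n - 81"] dcube_Gamma7[of "n - 81"] assms by (cases "n - 81 \<le> 51") auto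
  ultimately show ?thesis
    using assms by auto
qed

lemma dcube_Gamma9:
  assumes "176 < n" "n \<le> 325"
  shows "dcube n = (if (197 \<le> n \<and> n \<le> 200) \<or> n = 207 \<or> n = 256 \<or> n = 257 \<or> n = 288
    then 1 else 0)"
proof -
  have "dcube n = dcube (n - 149) + (if 197 \<le> n \<and> n \<le> 200 then 1 else 0)"
    using dcube_rec[of 5 n] assms by (simp add: gamma_hi_values trib_values run_values)
  moreover have "dcube (n - 149) = (if n = 207 \<or> n = 256 \<or> n = 257 \<or> n = 288 then 1 else 0)"
    using dcube_eq_0[of "n - 149"] dcube_Gamma7[of "n - 149"] dcube_Gamma8[of "n - 149"] assms
    by (cases "n - 149 \<le> 51"; cases "n - 149 \<le> 95") auto
  ultimately show ?thesis
    using assms by auto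
qed

lemma nth_dvec_upt: "i < b - a \<Longrightarrow> dvec [a..<b] ! i = dcube (a + i)"
  by (simp add: dvec_def)

lemma length_dvec_upt: "length (dvec [a..<b]) = b - a"
  by (simp add: dvec_def)

lemma upt_append_upt: "i \<le> j \<Longrightarrow> j \<le> k \<Longrightarrow> [i..<j] @ [j..<k] = [i..<k]"
  by (metis le_add_diff_inverse upt_add_eq_append)

lemma Gamma1_values: "Gamma1 7 = [52..<96]" "Gamma1 8 = [96..<177]" "Gamma1 9 = [177..<326]"
  using Gamma1_Suc[of 6] Gamma1_Suc[of 7] Gamma1_Suc[of 8] by (simp_all add: gamma_hi_values)

lemma dvec_Gamma1_concat:
  "dvec (Gamma1 (k + 1)) @ dvec (Gamma1 (k + 2)) @ dvec (Gamma1 (k + 3))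
     = dvec [gamma_hi k + 1 ..< gamma_hi (k + 3) + 1]"
proof -
  have "Gamma1 (k + 1) = [gamma_hi k + 1 ..< gamma_hi (k + 1) + 1]"
    "Gamma1 (k + 2) = [gamma_hi (k + 1) + 1 ..< gamma_hi (k + 2) + 1]"
    "Gamma1 (k + 3) = [gamma_hi (k + 2) + 1 ..< gamma_hi (k + 3) + 1]"
    using Gamma1_Suc[of k] Gamma1_Suc[of "k + 1"] Gamma1_Suc[of "k + 2"]
    by (simp_all add: eval_nat_numeral del: upt_Suc)
  moreover have "gamma_hi k \<le> gamma_hi (k + 1)" "gamma_hi (k + 1) \<le> gamma_hi (k + 2)"
    "gamma_hi (k + 2) \<le> gamma_hi (k + 3)"
    by (simp_all add: gamma_hi_mono)
  ultimately show ?thesis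
    unfolding dvec_def map_append[symmetric] by (simp add: upt_append_upt del: upt_Suc)
qed

text \<open>Positions of the new cubes inside \<open>\<Gamma>\<^sub>k\<^sub>+\<^sub>4\<^sub>,\<^sub>1\<close>: the run of period \<open>t\<^sub>k\<close> contributes
  the ends \<open>gamma_hi (k + 3) + 1 + i\<close> with \<open>a \<le> i < a + b\<close>.\<close>
lemma run_window_offsets:
  assumes "3 \<le> k"
  defines "a \<equiv> nat ((- int (trib (k + 2)) + 5 * int (trib k) + 1) div 2)"
    and "b \<equiv> nat ((int (trib (k + 2)) - 3 * int (trib k) - 1) div 2)"
  shows "run_start k + 3 * trib k = gamma_hi (k + 3) + 2 + a"
    and "run_length k + 1 = 3 * trib k + b"
    and "a + b + trib (k + 2) + trib (k + 1) = trib (k + 3)"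
proof -
  obtain i where k: "k = i + 3"
    using assms(1) by (metis add.commute le_Suc_ex)
  have "trib i < trib (Suc (Suc i))"
    by simp
  moreover have "2 * gamma_hi (k + 3) + 3 = trib (k + 4) + trib (k + 2)"
    "2 * gamma_hi (k + 1) + 3 = trib (k + 2) + trib k"
    using gamma_hi_eq[of "k + 3"] gamma_hi_eq[of "k + 1"] by (simp_all add: eval_nat_numeral)
  ultimately have
    "- int (trib (k + 2)) + 5 * int (trib k) + 1
       = 2 * (int (run_start k) + 3 * int (trib k) - int (gamma_hi (k + 3)) - 2)"
    "int (trib (k + 2)) - 3 * int (trib k) - 1
       = 2 * (int (run_length k) + 1 - 3 * int (trib k))"
    "3 * int (trib k) \<le> int (run_length k) + 1"
    "int (gamma_hi (k + 3)) + 2 \<le> int (run_start k) + 3 * int (trib k)"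
    "int (run_length k) + 1 - 3 * int (trib k) + int (run_start k) + 3 * int (trib k)
       - int (gamma_hi (k + 3)) - 2 + int (trib (k + 2)) + int (trib (k + 1)) = int (trib (k + 3))"
    unfolding k run_start_def run_length_def
    by (simp_all add: eval_nat_numeral trib_Suc_Suc_Suc del: trib_less_iff)
  then have "int a = int (run_start k) + 3 * int (trib k) - int (gamma_hi (k + 3)) - 2"
    "int b = int (run_length k) + 1 - 3 * int (trib k)"
    unfolding a_def b_def by simp_all
  then show "run_start k + 3 * trib k = gamma_hi (k + 3) + 2 + a"
    "run_length k + 1 = 3 * trib k + b"
    "a + b + trib (k + 2) + trib (k + 1) = trib (k + 3)"
    using \<open>int (run_length k) + 1 - 3 * int (trib k) + int (run_start k) + 3 * int (trib k)
       - int (gamma_hi (k + 3)) - 2 + int (trib (k + 2)) + int (trib (k + 1)) = int (trib (k + 3))\<close>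
    by linarith+
qed

lemma dvec_Gamma1_rec:
  assumes k: "3 \<le> k"
  defines "A \<equiv> dvec (Gamma1 (k + 1)) @ dvec (Gamma1 (k + 2)) @ dvec (Gamma1 (k + 3))"
    and "a \<equiv> nat ((- int (trib (k + 2)) + 5 * int (trib k) + 1) div 2)"
    and "b \<equiv> nat ((int (trib (k + 2)) - 3 * int (trib k) - 1) div 2)"
  defines "B \<equiv> replicate a 0 @ replicate b 1 @ replicate (trib (k + 2) + trib (k + 1)) 0"
  shows "length A = length B" "dvec (Gamma1 (k + 4)) = map2 (+) A B"
proof -
  let ?t = "trib (k + 3)" and ?h = "gamma_hi (k + 3)"
  note offsets = run_window_offsets[OF k, folded a_def b_def]
  have h: "?h = ?t + gamma_hi k" "gamma_hi (k + 4) = ?h + ?t"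
    using gamma_hi_rec[of "k + 3"] gamma_hi_Suc[of "k + 3"] by (simp_all add: eval_nat_numeral)
  have A: "A = dvec [gamma_hi k + 1 ..< ?h + 1]"
    unfolding A_def by (rule dvec_Gamma1_concat)
  have G: "dvec (Gamma1 (k + 4)) = dvec [?h + 1 ..< ?h + ?t + 1]"
    using Gamma1_Suc[of "k + 3"] h(2) by (simp add: eval_nat_numeral del: upt_Suc)
  have len: "length A = ?t" "length B = ?t" "length (dvec (Gamma1 (k + 4))) = ?t"
    using offsets(3) h by (simp_all add: A G B_def length_dvec_upt del: upt_Suc)
  then show "length A = length B"
    by simp
  show "dvec (Gamma1 (k + 4)) = map2 (+) A B"
  proof (rule nth_equalityI)
    fix i assume "i < length (dvec (Gamma1 (k + 4)))"
    then have i: "i < ?t"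
      using len by simp
    have "dcube (?h + 1 + i) = dcube (gamma_hi k + 1 + i) + (if a \<le> i \<and> i < a + b then 1 else 0)"
      using dcube_rec[of k "?h + 1 + i"] h i offsets(1,2)
      by (simp add: run_length_def eval_nat_numeral)
    moreover have "B ! i = (if a \<le> i \<and> i < a + b then 1 else 0)"
      using i offsets(3) by (simp add: B_def nth_append) arith
    ultimately show "dvec (Gamma1 (k + 4)) ! i = map2 (+) A B ! i"
      using i len h by (simp add: A G nth_dvec_upt del: upt_Suc)
  qed (use len in simp)
qed

lemma dvec_Gamma1_values:
  "dvec (Gamma1 7) = replicate 6 0 @ [1] @ replicate 37 0"
  "dvec (Gamma1 8) = replicate 11 0 @ [1, 1] @ replicate 30 0 @ [1] @ replicate 37 0"
  "dvec (Gamma1 9) = replicate 20 0 @ replicate 4 1 @ replicate 6 0 @ [1]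
     @ replicate 48 0 @ [1, 1] @ replicate 30 0 @ [1] @ replicate 37 0"
proof -
  have len: "length (dvec (Gamma1 7)) = 44" "length (dvec (Gamma1 8)) = 81"
    "length (dvec (Gamma1 9)) = 149"
    unfolding Gamma1_values length_dvec_upt by simp_all
  have nth: "i < 44 \<Longrightarrow> dvec (Gamma1 7) ! i = dcube (52 + i)"
    "i < 81 \<Longrightarrow> dvec (Gamma1 8) ! i = dcube (96 + i)"
    "i < 149 \<Longrightarrow> dvec (Gamma1 9) ! i = dcube (177 + i)" for i
    unfolding Gamma1_values by (simp_all add: nth_dvec_upt del: upt_rec_numeral)
  show "dvec (Gamma1 7) = replicate 6 0 @ [1] @ replicate 37 0"
  proof (rule nth_equalityI)
    fix i assume "i < length (dvec (Gamma1 7))"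
    then show "dvec (Gamma1 7) ! i = (replicate 6 0 @ [1] @ replicate 37 0) ! i"
      using len nth dcube_Gamma7[of "52 + i"] by (simp add: nth_append)
  qed (simp add: len)
  show "dvec (Gamma1 8) = replicate 11 0 @ [1, 1] @ replicate 30 0 @ [1] @ replicate 37 0"
  proof (rule nth_equalityI)
    fix i assume "i < length (dvec (Gamma1 8))"
    then show "dvec (Gamma1 8) ! i = (replicate 11 0 @ [1, 1] @ replicate 30 0 @ [1]
        @ replicate 37 0) ! i"
      using len nth dcube_Gamma8[of "96 + i"] by (simp add: nth_append nth_Cons') arith
  qed (simp add: len)
  show "dvec (Gamma1 9) = replicate 20 0 @ replicate 4 1 @ replicate 6 0 @ [1]
     @ replicate 48 0 @ [1, 1] @ replicate 30 0 @ [1] @ replicate 37 0"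
  proof (rule nth_equalityI)
    fix i assume "i < length (dvec (Gamma1 9))"
    then show "dvec (Gamma1 9) ! i = (replicate 20 0 @ replicate 4 1 @ replicate 6 0 @ [1]
        @ replicate 48 0 @ [1, 1] @ replicate 30 0 @ [1] @ replicate 37 0) ! i"
      using len nth dcube_Gamma9[of "177 + i"] by (simp add: nth_append nth_Cons') arith
  qed (simp add: len)
qed

theorem mainTheorem8:
  shows "(\<forall>n \<le> 51. dcube n = 0)
    \<and> Gamma1 7 = [52..<96]
    \<and> dvec (Gamma1 7) = replicate 6 0 @ [1] @ replicate 37 0
    \<and> Gamma1 8 = [96..<177]
    \<and> dvec (Gamma1 8) = replicate 11 0 @ [1, 1] @ replicate 30 0 @ [1] @ replicate 37 0
    \<and> Gamma1 9 = [177..<326]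
    \<and> dvec (Gamma1 9) = replicate 20 0 @ replicate 4 1 @ replicate 6 0 @ [1]
          @ replicate 48 0 @ [1, 1] @ replicate 30 0 @ [1] @ replicate 37 0
    \<and> (\<forall>m \<ge> 10.
         (let A = dvec (Gamma1 (m - 3)) @ dvec (Gamma1 (m - 2)) @ dvec (Gamma1 (m - 1));
              B = replicate (nat ((- int (trib (m - 2)) + 5 * int (trib (m - 4)) + 1) div 2)) 0
                  @ replicate (nat ((int (trib (m - 2)) - 3 * int (trib (m - 4)) - 1) div 2)) 1
                  @ replicate (trib (m - 2) + trib (m - 3)) 0
          in length A = length B \<and> dvec (Gamma1 m) = map2 (+) A B))"
proof (intro conjI allI impI)
  fix m :: nat
  assume "10 \<le> m"
  moreover define k where "k = m - 4"
  ultimately have "m = k + 4" "3 \<le> k"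
    by simp_all
  then show "let A = dvec (Gamma1 (m - 3)) @ dvec (Gamma1 (m - 2)) @ dvec (Gamma1 (m - 1));
              B = replicate (nat ((- int (trib (m - 2)) + 5 * int (trib (m - 4)) + 1) div 2)) 0
                  @ replicate (nat ((int (trib (m - 2)) - 3 * int (trib (m - 4)) - 1) div 2)) 1
                  @ replicate (trib (m - 2) + trib (m - 3)) 0
          in length A = length B \<and> dvec (Gamma1 m) = map2 (+) A B"
    using dvec_Gamma1_rec[of k] by (simp add: Let_def eval_nat_numeral)
qed (fact Gamma1_values dvec_Gamma1_values | simp add: dcube_eq_0)+

end
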